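(* Let $U=U(\mathrm{Vir};v,2)$ and $P=\mathrm{gr}\,U$ its associated graded Poisson conformal algebra. Then $P$ is a free $H$-module with basis the classes of $(L_0)^nv$, $n\ge0$ (where $L_0u=v_{(0)}u$), and the $H$-linear map sending the class of $(L_0)^nv$ to $v^{n+1}$ is an isomorphism of Poisson conformal algebras from $P$ onto $PV_2$.
   Context: $\Bbbk$ is a field of characteristic $0$, $H=\Bbbk[\partial]$; $\lambda$-products $(x_\lambda y)=\sum_n\frac{\lambda^n}{n!}(x_{(n)}y)$ satisfy $(\partial x_\lambda y)=-\lambda(x_\lambda y)$, $(x_\lambda\partial y)=(\partial+\lambda)(x_\lambda y)$, and $(x_{-\partial-\lambda}y)=\sum_n\frac{(-\partial-\lambda)^n}{n!}(x_{(n)}y)$. $\mathrm{Vir}=Hv$ with $[v_\lambda v]=(\partial+2\lambda)v$. $U(\mathrm{Vir};v,N)$ is the associative conformal algebra generated by $v$ subject to $(v_{(n)}v)=0$ for $n\ge N$ and $(v_\lambda v)-(v_{-\partial-\lambda}v)=(\partial+2\lambda)v$. $F_nU$ is the $H$-span of the elements $v_{(n_1)}(v_{(n_2)}(\cdots(v_{(n_k)}v)\cdots))$ with $k+1\le n$ factors $v$, $F_0U=0$; $\mathrm{gr}\,U=\bigoplus_{n\ge1}F_nU/F_{n-1}U$ with $(\bar u_\lambda\bar w)=\overline{(u_\lambda w)}$ (in degree $n+m$) and $[\bar u_\lambda\bar w]=\overline{(u_\lambda w)-(w_{-\partial-\lambda}u)}$ (in degree $n+m-1$) for $u\in F_nU$,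 $w\in F_mU$. $PV_2=H\otimes\Bbbk[v]$ is the Poisson conformal algebra with $(v^m{}_\lambda v^n)=v^{n+m}$ and $[v^m{}_\lambda v^n]=(m\partial+(n+m)\lambda)v^{n+m-1}$, extended by sesquilinearity. *)

theory Defs
  imports "HOL-Computational_Algebra.Polynomial"
begin

text \<open>Formal expressions built from the generator v, zero, sums, scalars,
  the derivation and the n-products (Prd n a b stands for a_(n) b).\<close>
datatype 'k ct = Gen | Zer | Add "'k ct" "'k ct" | Sml 'k "'k ct" | Der "'k ct"
  | Prd nat "'k ct" "'k ct"

definition tsum :: "'k ct list \<Rightarrow> 'k ct" where
  "tsum xs = foldr Add xs Zer"

definition Sub :: "'k::field_char_0 ct \<Rightarrow> 'k ct \<Rightarrow> 'k ct" where
  "Sub x y = Add x (Sml (-1) y)"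

definition ders :: "nat \<Rightarrow> 'k ct \<Rightarrow> 'k ct" where
  "ders i x = (Der ^^ i) x"

definition pact :: "'k::field_char_0 poly \<Rightarrow> 'k ct \<Rightarrow> 'k ct" where
  "pact p x = tsum (map (\<lambda>i. Sml (coeff p i) (ders i x)) [0..<Suc (degree p)])"

text \<open>k! times the coefficient of lambda^k of (v_{-\<partial>-\<lambda>} v), truncated at N
  (the products v_(j) v with j \<ge> N vanish by the defining relations), and of
  (\<partial>+2\<lambda>)v.\<close>
definition virrhs :: "nat \<Rightarrow> 'k::field_char_0 ct" where
  "virrhs k = (if k = 0 then Der Gen else if k = 1 then Sml 2 Gen else Zer)"

text \<open>The congruence defining U(Vir; v, N): axioms of an associative conformal
  algebra (in terms of n-products) plus the defining relations.\<close>
inductive ceq :: "nat \<Rightarrow> 'k::field_char_0 ct \<Rightarrow> 'k ct \<Rightarrow> bool" for N :: nat where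
  refl: "ceq N x x"
| sym: "ceq N x y \<Longrightarrow> ceq N y x"
| trans: "ceq N x y \<Longrightarrow> ceq N y z \<Longrightarrow> ceq N x z"
| cAdd: "ceq N x x' \<Longrightarrow> ceq N y y' \<Longrightarrow> ceq N (Add x y) (Add x' y')"
| cSml: "ceq N x x' \<Longrightarrow> ceq N (Sml a x) (Sml a x')"
| cDer: "ceq N x x' \<Longrightarrow> ceq N (Der x) (Der x')"
| cPrd: "ceq N x x' \<Longrightarrow> ceq N y y' \<Longrightarrow> ceq N (Prd n x y) (Prd n x' y')"
| add_assoc: "ceq N (Add (Add x y) z) (Add x (Add y z))"
| add_comm: "ceq N (Add x y) (Add y x)"
| add_zero: "ceq N (Add Zer x) x"
| sml_one: "ceq N (Sml 1 x) x"
| sml_zero: "ceq N (Sml 0 x) Zer"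
| sml_sml: "ceq N (Sml a (Sml b x)) (Sml (a * b) x)"
| sml_distl: "ceq N (Sml (a + b) x) (Add (Sml a x) (Sml b x))"
| sml_distr: "ceq N (Sml a (Add x y)) (Add (Sml a x) (Sml a y))"
| der_add: "ceq N (Der (Add x y)) (Add (Der x) (Der y))"
| der_sml: "ceq N (Der (Sml a x)) (Sml a (Der x))"
| prd_addl: "ceq N (Prd n (Add x y) z) (Add (Prd n x z) (Prd n y z))"
| prd_addr: "ceq N (Prd n x (Add y z)) (Add (Prd n x y) (Prd n x z))"
| prd_smll: "ceq N (Prd n (Sml a x) y) (Sml a (Prd n x y))"
| prd_smlr: "ceq N (Prd n x (Sml a y)) (Sml a (Prd n x y))"
| prd_derl: "ceq N (Prd n (Der x) y) (Sml (- of_nat n) (Prd (n - 1) x y))"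
| prd_derr: "ceq N (Prd n x (Der y)) (Add (Der (Prd n x y)) (Sml (of_nat n) (Prd (n - 1) x y)))"
| prd_assoc: "ceq N (Prd n x (Prd m y z))
     (tsum (map (\<lambda>j. Sml (of_nat (n choose j)) (Prd (m + n - j) (Prd j x y) z)) [0..<Suc n]))"
| rel_loc: "n \<ge> N \<Longrightarrow> ceq N (Prd n Gen Gen) Zer"
| rel_vir: "ceq N (Sub (Prd k Gen Gen)
     (tsum (map (\<lambda>j. Sml ((-1) ^ j / fact (j - k)) (ders (j - k) (Prd j Gen Gen))) [k..<N])))
     (virrhs k)"

primrec mono :: "nat list \<Rightarrow> 'k ct" where
  "mono [] = Gen"
| "mono (n # ns) = Prd n Gen (mono ns)"

text \<open>x lies in F_n U: x is (in U) an H-linear combination of monomials with at most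
  n factors v.\<close>
definition inF :: "nat \<Rightarrow> nat \<Rightarrow> 'k::field_char_0 ct \<Rightarrow> bool" where
  "inF N n x \<longleftrightarrow> (\<exists>L :: ('k \<times> nat \<times> nat list) list.
      (\<forall>(c, i, ns) \<in> set L. length ns < n) \<and>
      ceq N x (tsum (map (\<lambda>(c, i, ns). Sml c (ders i (mono ns))) L)))"

text \<open>(L_0)^n v = v_(0)(v_(0)(... v)).\<close>
definition L0v :: "nat \<Rightarrow> 'k ct" where
  "L0v n = mono (replicate n 0)"

text \<open>Polynomials in \<partial> with coefficients in k; polynomials in \<lambda> with coefficients
  in k[\<partial>] are 'k poly poly (outer variable \<lambda>).  psub p s = p(s).\<close>
definition psub :: "'k::field_char_0 poly \<Rightarrow> 'k poly poly \<Rightarrow> 'k poly poly" where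
  "psub p s = poly (map_poly (\<lambda>c. [:[:c:]:]) p) s"

text \<open>(p(\<partial>)v^n _\<lambda> q(\<partial>)v^m) = p(-\<lambda>) q(\<partial>+\<lambda>) v^(n+m).\<close>
definition pvprod :: "'k::field_char_0 poly \<Rightarrow> 'k poly \<Rightarrow> 'k poly poly" where
  "pvprod p q = psub p [:0, -1:] * psub q [:[:0, 1:], 1:]"

text \<open>[p(\<partial>)v^n _\<lambda> q(\<partial>)v^m] = p(-\<lambda>) q(\<partial>+\<lambda>) (n\<partial> + (n+m)\<lambda>) v^(n+m-1).\<close>
definition pvbr :: "nat \<Rightarrow> nat \<Rightarrow> 'k::field_char_0 poly \<Rightarrow> 'k poly \<Rightarrow> 'k poly poly" where
  "pvbr n m p q = pvprod p q * [:[:0, of_nat n:], [:of_nat (n + m):]:]"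

text \<open>k! times the coefficient of \<lambda>^k in (u_\<lambda> w) - (w_{-\<partial>-\<lambda>} u), where the sum
  over j is truncated at a bound B beyond which w_(j) u vanishes.\<close>
definition brk :: "nat \<Rightarrow> nat \<Rightarrow> 'k::field_char_0 ct \<Rightarrow> 'k ct \<Rightarrow> 'k ct" where
  "brk k B u w = Sub (Prd k u w)
     (tsum (map (\<lambda>j. Sml ((-1) ^ j / fact (j - k)) (ders (j - k) (Prd j w u))) [k..<B]))"

end

theory Submission
  imports Defs
begin

text \<open>
  U(Vir; v, 2) is realised faithfully on k[\<partial>][x]: v acts as x and the \<lambda>-product is
  (U _\<lambda> W)(\<partial>, x) = U(-\<lambda>, x) W(\<partial> + \<lambda>, x + \<lambda>).  The defining relations hold there, and
  conversely every element of U reduces, by the relations alone, to an H-combination of the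
  elements (L_0)^a v, which are sent to the H-independent powers x^(a+1).  Hence F_n U consists of
  the elements of x-degree at most n and the class of such an element is its coefficient of x^n.
  Dropping the shift of x, the top coefficient of a product is the PV_2 product of the top
  coefficients; in u _\<lambda> w - w _{-\<partial>-\<lambda>} u these top terms cancel and the next coefficient is the
  PV_2 bracket.
\<close>

lemma map_poly_add_hom:
  assumes "f 0 = 0" "\<And>a b. f (a + b) = f a + f b"
  shows "map_poly f (p + q) = map_poly f p + map_poly f q"
  by (intro poly_eqI) (simp add: coeff_map_poly assms)

lemma map_poly_mult_hom:
  fixes f :: "'a::comm_semiring_1 \<Rightarrow> 'b::comm_semiring_1"
  assumes "f 0 = 0" "\<And>a b. f (a + b) = f a + f b" "\<And>a b. f (a * b) = f a * f b"
  shows "map_poly f (p * q) = map_poly f p * map_poly f q"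
proof (induct p)
  case (pCons a p)
  have "map_poly f (pCons a p * q) = map_poly f (smult a q + pCons 0 (p * q))" by simp
  also have "\<dots> = smult (f a) (map_poly f q) + pCons 0 (map_poly f p * map_poly f q)"
    by (simp add: map_poly_add_hom assms map_poly_smult map_poly_pCons pCons.hyps)
  also have "\<dots> = map_poly f (pCons a p) * map_poly f q" by (simp add: map_poly_pCons assms)
  finally show ?case .
qed simp

lemma smult_sum_right: "smult a (sum f A) = (\<Sum>x\<in>A. smult a (f x))"
  by (induct A rule: infinite_finite_induct) (simp_all add: smult_add_right)

lemma sum_pCons_0: "(\<Sum>x\<in>A. pCons 0 (f x)) = pCons 0 (sum f A)"
  by (induct A rule: infinite_finite_induct) simp_all

lemma smult_const_const: "smult [:a::'k::comm_ring_1:] (smult [:b:] x) = smult [:a * b:] x"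
  by (simp add: mult.commute)

lemma smult_const_neg: "smult [:- (a::'k::comm_ring_1):] p = - smult [:a:] p"
  by (rule poly_eqI) (simp add: smult_minus_left)

lemma smult_const_one [simp]: "smult [:1::'k::comm_ring_1:] p = p"
  by (simp flip: one_pCons)

lemma const_const_one: "[:[:1:]:] = 1"
  by (simp flip: one_pCons)

lemma coeff_mult_at_degree_bound:
  fixes A B :: "'a::comm_ring_1 poly"
  assumes "degree A \<le> n" "degree B \<le> m"
  shows "coeff (A * B) (n + m) = coeff A n * coeff B m"
proof -
  have "coeff (A * B) (n + m) = (\<Sum>i\<le>n + m. coeff A i * coeff B (n + m - i))" by (rule coeff_mult)
  also have "\<dots> = (\<Sum>i\<in>{n}. coeff A i * coeff B (n + m - i))"
  proof (rule sum.mono_neutral_right)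
    show "\<forall>i\<in>{..n + m} - {n}. coeff A i * coeff B (n + m - i) = 0"
    proof
      fix i assume "i \<in> {..n + m} - {n}"
      then have "i < n \<or> i > n" by auto
      then show "coeff A i * coeff B (n + m - i) = 0"
        using assms by (auto simp: coeff_eq_0)
    qed
  qed auto
  finally show ?thesis by simp
qed

lemma coeff_mult_below_degree_bound:
  fixes A B :: "'a::comm_ring_1 poly"
  assumes "degree A \<le> n" "degree B \<le> m" "1 \<le> n" "1 \<le> m"
  shows "coeff (A * B) (n + m - 1) = coeff A n * coeff B (m - 1) + coeff A (n - 1) * coeff B m"
proof -
  have "coeff (A * B) (n + m - 1) = (\<Sum>i\<le>n + m - 1. coeff A i * coeff B (n + m - 1 - i))"
    by (rule coeff_mult)
  also have "\<dots> = (\<Sum>i\<in>{n - 1, n}. coeff A i * coeff B (n + m - 1 - i))"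
  proof (rule sum.mono_neutral_right)
    show "\<forall>i\<in>{..n + m - 1} - {n - 1, n}. coeff A i * coeff B (n + m - 1 - i) = 0"
    proof
      fix i assume "i \<in> {..n + m - 1} - {n - 1, n}"
      then have "i < n - 1 \<or> i > n" by auto
      then show "coeff A i * coeff B (n + m - 1 - i) = 0"
        using assms by (auto simp: coeff_eq_0)
    qed
  qed (use assms in auto)
  also have "\<dots> = coeff A n * coeff B (m - 1) + coeff A (n - 1) * coeff B m"
    using assms by (simp add: algebra_simps)
  finally show ?thesis .
qed

lemma degree_le_pred_if_coeff_eq_0:
  assumes "degree P \<le> n" "coeff P n = 0"
  shows "degree P \<le> n - 1"
proof (cases "degree P = n")
  case True
  then have "P = 0" using assms(2) by (metis leading_coeff_0_iff)
  then show ?thesis by simp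
qed (use assms(1) in simp)

lemma degree_le_if_coeff_eventually_0: "\<forall>j\<ge>B. coeff c j = 0 \<Longrightarrow> degree c \<le> B"
  by (metis leading_coeff_0_iff degree_0 le_zero_eq nat_le_linear)

lemma degree_diff_monom_le_pred:
  fixes U :: "'a::comm_ring_1 poly"
  assumes "degree U \<le> n" "coeff U n = p"
  shows "degree (U - monom p n) \<le> n - 1"
proof (rule degree_le_pred_if_coeff_eq_0)
  show "degree (U - monom p n) \<le> n"
    using degree_diff_le[OF assms(1) degree_monom_le[of p n]] .
qed (use assms in simp)

lemma degree_diff_monom_le_pred_iff:
  fixes U :: "'a::comm_ring_1 poly"
  assumes "1 \<le> n"
  shows "degree (U - monom p n) \<le> n - 1 \<longleftrightarrow> degree U \<le> n \<and> coeff U n = p"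
proof
  assume d: "degree (U - monom p n) \<le> n - 1"
  then have "coeff (U - monom p n) n = 0" using assms by (intro coeff_eq_0) linarith
  moreover have "degree U \<le> n"
    using degree_add_le[OF _ degree_monom_le[of p n], of "U - monom p n"] d by simp
  ultimately show "degree U \<le> n \<and> coeff U n = p" by simp
qed (use degree_diff_monom_le_pred in blast)

lemma pcompose_monom: "pcompose (monom a j) q = smult a (q ^ j)"
  by (induct j) (simp_all add: monom_0 monom_Suc pcompose_pCons)

lemma coeff_pcompose_eq_sum:
  assumes "degree V \<le> D"
  shows "coeff (pcompose V q) i = (\<Sum>j\<le>D. coeff V j * coeff (q ^ j) i)"
proof -
  have "pcompose V q = pcompose (\<Sum>j\<le>D. monom (coeff V j) j) q"
    using poly_as_sum_of_monoms'[OF assms] by simp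
  also have "\<dots> = (\<Sum>j\<le>D. smult (coeff V j) (q ^ j))" by (simp add: pcompose_sum pcompose_monom)
  finally show ?thesis by (simp add: coeff_sum)
qed

lemma coeff_linear_poly_power_if:
  "coeff ([:a, b:] ^ j) i =
     (if i \<le> j then of_nat (j choose i) * b ^ i * a ^ (j - i) else (0::'a::comm_ring_1))"
proof -
  have "degree ([:a, b:] ^ j) \<le> j"
    using degree_power_le[of "[:a, b:]" j] by (simp add: le_trans mult_le_cancel2)
  then show ?thesis by (auto simp: coeff_linear_poly_power coeff_eq_0)
qed

lemma coeff_pcompose_shift_top:
  fixes c :: "'a::comm_ring_1"
  assumes "degree V \<le> m"
  shows "coeff (pcompose V [:c, 1:]) m = coeff V m"
proof -
  have "coeff (pcompose V [:c, 1:]) m = (\<Sum>j\<le>m. coeff V j * coeff ([:c, 1:] ^ j) m)"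
    by (rule coeff_pcompose_eq_sum[OF assms])
  also have "\<dots> = (\<Sum>j\<in>{m}. coeff V j * coeff ([:c, 1:] ^ j) m)"
    by (rule sum.mono_neutral_right) (auto simp: coeff_linear_poly_power_if)
  finally show ?thesis by (simp add: coeff_linear_poly_power_if)
qed

lemma coeff_pcompose_shift_below_top:
  fixes c :: "'a::comm_ring_1"
  assumes "degree V \<le> m" "1 \<le> m"
  shows "coeff (pcompose V [:c, 1:]) (m - 1) = coeff V (m - 1) + of_nat m * c * coeff V m"
proof -
  have "coeff (pcompose V [:c, 1:]) (m - 1) = (\<Sum>j\<le>m. coeff V j * coeff ([:c, 1:] ^ j) (m - 1))"
    by (rule coeff_pcompose_eq_sum[OF assms(1)])
  also have "\<dots> = (\<Sum>j\<in>{m - 1, m}. coeff V j * coeff ([:c, 1:] ^ j) (m - 1))"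
    by (rule sum.mono_neutral_right) (use assms in \<open>auto simp: coeff_linear_poly_power_if\<close>)
  also have "\<dots> = coeff V (m - 1) + of_nat m * c * coeff V m"
  proof -
    have "m choose (m - 1) = m" using binomial_symmetric[of "m - 1" m] assms(2) by simp
    then show ?thesis using assms by (simp add: coeff_linear_poly_power_if algebra_simps)
  qed
  finally show ?thesis .
qed

section \<open>The \<lambda>-product of the model\<close>

lemma psub_pCons: "psub (pCons a p) s = [:[:a:]:] + s * psub p s"
  by (simp add: psub_def map_poly_pCons)

lemma psub_0 [simp]: "psub 0 s = 0"
  by (simp add: psub_def)

lemma psub_add: "psub (p + q) s = psub p s + psub q s"
  by (simp add: psub_def map_poly_add_hom)

lemma psub_mult: "psub (p * q) s = psub p s * psub q s"
  by (simp add: psub_def map_poly_mult_hom)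

lemma psub_const [simp]: "psub [:a:] s = [:[:a:]:]"
  by (simp add: psub_pCons)

lemma psub_1 [simp]: "psub 1 s = 1"
  by (metis psub_const one_pCons)

lemma psub_X: "psub [:0, 1:] s = s"
  using psub_pCons[of 0 "[:1:]" s] by (simp flip: one_pCons)

lemma pcompose_psub: "pcompose (psub a s) Q = psub a (pcompose s Q)"
  by (induct a) (simp_all add: psub_pCons pcompose_add pcompose_mult)

text \<open>Elements of the model are polynomials in x with coefficients in H = k[\<partial>].  A \<lambda>-product
  lives in k[\<partial>][\<lambda>][x], the variable \<lambda> being the middle one.\<close>
type_synonym 'k pv = "'k poly poly"

definition neg_lambda :: "'k::field_char_0 poly \<Rightarrow> 'k poly poly" where
  "neg_lambda c = psub c [:0, -1:]"

definition shift_lambda :: "'k::field_char_0 poly \<Rightarrow> 'k poly poly" where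
  "shift_lambda c = psub c [:[:0, 1:], 1:]"

text \<open>U(-\<lambda>, x) W(\<partial> + \<lambda>, x + \<lambda>); the shift of x is what produces v_(1) v = v, i.e. what
  distinguishes U from its associated graded algebra.\<close>
definition lprod :: "'k::field_char_0 pv \<Rightarrow> 'k pv \<Rightarrow> 'k poly poly poly" where
  "lprod U W = map_poly neg_lambda U * pcompose (map_poly shift_lambda W) [:[:0, 1:], 1:]"

definition lambda_coeff :: "nat \<Rightarrow> 'k::field_char_0 poly poly poly \<Rightarrow> 'k pv" where
  "lambda_coeff n P = map_poly (\<lambda>c. coeff c n) P"

definition nprod :: "nat \<Rightarrow> 'k::field_char_0 pv \<Rightarrow> 'k pv \<Rightarrow> 'k pv" where
  "nprod n U W = smult [:fact n:] (lambda_coeff n (lprod U W))"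

lemma neg_lambda_0 [simp]: "neg_lambda 0 = 0"
  and neg_lambda_1 [simp]: "neg_lambda 1 = 1"
  and neg_lambda_add: "neg_lambda (a + b) = neg_lambda a + neg_lambda b"
  and neg_lambda_mult: "neg_lambda (a * b) = neg_lambda a * neg_lambda b"
  and neg_lambda_const [simp]: "neg_lambda [:c:] = [:[:c:]:]"
  and neg_lambda_X: "neg_lambda [:0, 1:] = [:0, -1:]"
  by (simp_all add: neg_lambda_def psub_add psub_mult psub_X)

lemma shift_lambda_0 [simp]: "shift_lambda 0 = 0"
  and shift_lambda_1 [simp]: "shift_lambda 1 = 1"
  and shift_lambda_add: "shift_lambda (a + b) = shift_lambda a + shift_lambda b"
  and shift_lambda_mult: "shift_lambda (a * b) = shift_lambda a * shift_lambda b"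
  and shift_lambda_const [simp]: "shift_lambda [:c:] = [:[:c:]:]"
  and shift_lambda_X: "shift_lambda [:0, 1:] = [:[:0, 1:], 1:]"
  by (simp_all add: shift_lambda_def psub_add psub_mult psub_X)

lemma map_neg_lambda_add:
  "map_poly neg_lambda (p + q) = map_poly neg_lambda p + map_poly neg_lambda q"
  by (rule map_poly_add_hom) (simp_all add: neg_lambda_add)

lemma map_shift_lambda_add:
  "map_poly shift_lambda (p + q) = map_poly shift_lambda p + map_poly shift_lambda q"
  by (rule map_poly_add_hom) (simp_all add: shift_lambda_add)

lemma map_neg_lambda_smult:
  "map_poly neg_lambda (smult a p) = smult (neg_lambda a) (map_poly neg_lambda p)"
  by (rule map_poly_smult) (simp_all add: neg_lambda_mult)

lemma map_shift_lambda_smult: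
  "map_poly shift_lambda (smult a p) = smult (shift_lambda a) (map_poly shift_lambda p)"
  by (rule map_poly_smult) (simp_all add: shift_lambda_mult)

lemma lprod_add_left: "lprod (U + U') W = lprod U W + lprod U' W"
  by (simp add: lprod_def map_neg_lambda_add algebra_simps)

lemma lprod_add_right: "lprod U (W + W') = lprod U W + lprod U W'"
  by (simp add: lprod_def map_shift_lambda_add pcompose_add algebra_simps)

lemma lprod_const_left: "lprod (smult [:c:] U) W = smult [:[:c:]:] (lprod U W)"
  by (simp add: lprod_def map_neg_lambda_smult)

lemma lprod_const_right: "lprod U (smult [:c:] W) = smult [:[:c:]:] (lprod U W)"
  by (simp add: lprod_def map_shift_lambda_smult pcompose_smult)

lemma lprod_der_left: "lprod (smult [:0, 1:] U) W = smult [:0, -1:] (lprod U W)"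
  by (simp add: lprod_def map_neg_lambda_smult neg_lambda_X)

lemma lprod_der_right: "lprod U (smult [:0, 1:] W) = smult [:[:0, 1:], 1:] (lprod U W)"
  by (simp add: lprod_def map_shift_lambda_smult pcompose_smult shift_lambda_X)

lemma lprod_x_left: "lprod (pCons 0 U) W = pCons 0 (lprod U W)"
  by (simp add: lprod_def map_poly_pCons)

lemma lprod_x_right: "lprod U (pCons 0 W) = smult [:0, 1:] (lprod U W) + pCons 0 (lprod U W)"
  by (simp add: lprod_def map_poly_pCons pcompose_pCons algebra_simps)

lemma lprod_1_1: "lprod 1 1 = 1"
  by (simp add: lprod_def pcompose_1)

lemma degree_lprod_factors:
  assumes "degree U \<le> n" "degree W \<le> m"
  shows "degree (map_poly neg_lambda U) \<le> n" "degree (map_poly shift_lambda W) \<le> m"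
    and "degree (pcompose (map_poly shift_lambda W) [:[:0, 1:], 1:]) \<le> m"
  using assms map_poly_degree_leq[of neg_lambda U] map_poly_degree_leq[of shift_lambda W]
    degree_pcompose_le[of "map_poly shift_lambda W" "[:[:0, 1:], 1:]"] by simp_all

lemma degree_lprod: "degree (lprod U W) \<le> degree U + degree W"
  unfolding lprod_def
  using degree_mult_le[of "map_poly neg_lambda U"]
    degree_lprod_factors(1,3)[OF order_refl order_refl]
  by (meson add_mono order_trans)

lemma coeff_lambda_coeff: "coeff (lambda_coeff n P) i = coeff (coeff P i) n"
  by (simp add: lambda_coeff_def coeff_map_poly)

lemma degree_lambda_coeff_le: "degree (lambda_coeff n P) \<le> degree P"
  unfolding lambda_coeff_def by (rule map_poly_degree_leq)

lemma lambda_coeff_0 [simp]: "lambda_coeff n 0 = 0"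
  by (simp add: lambda_coeff_def)

lemma lambda_coeff_add: "lambda_coeff n (P + Q) = lambda_coeff n P + lambda_coeff n Q"
  and lambda_coeff_diff: "lambda_coeff n (P - Q) = lambda_coeff n P - lambda_coeff n Q"
  and lambda_coeff_const: "lambda_coeff n (smult [:d:] P) = smult d (lambda_coeff n P)"
  and lambda_coeff_x: "lambda_coeff n (pCons 0 P) = pCons 0 (lambda_coeff n P)"
  by (auto intro!: poly_eqI simp: coeff_lambda_coeff coeff_pCons split: nat.split)

lemma lambda_coeff_lambda:
  "lambda_coeff n (smult [:0, 1:] P) = (if n = 0 then 0 else lambda_coeff (n - 1) P)"
  and lambda_coeff_neg_lambda:
  "lambda_coeff n (smult [:0, -1:] P) = (if n = 0 then 0 else - lambda_coeff (n - 1) P)"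
  and lambda_coeff_shift:
  "lambda_coeff n (smult [:[:0, 1:], 1:] P) =
     smult [:0, 1:] (lambda_coeff n P) + (if n = 0 then 0 else lambda_coeff (n - 1) P)"
  by (auto intro!: poly_eqI simp: coeff_lambda_coeff coeff_pCons algebra_simps split: nat.split)

lemma lambda_coeff_1: "lambda_coeff n 1 = (if n = 0 then 1 else 0)"
  by (rule poly_eqI) (simp add: coeff_lambda_coeff coeff_1)

lemma lambda_coeff_eventually_0: "\<exists>B. \<forall>j\<ge>B. lambda_coeff j P = 0"
proof (intro exI allI impI)
  fix j assume j: "Suc (\<Sum>a\<le>degree P. degree (coeff P a)) \<le> j"
  show "lambda_coeff j P = 0"
  proof (rule poly_eqI)
    fix a
    show "coeff (lambda_coeff j P) a = coeff 0 a"
    proof (cases "a \<le> degree P")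
      case True
      have "degree (coeff P a) \<le> (\<Sum>a\<le>degree P. degree (coeff P a))"
        by (rule member_le_sum) (use True in auto)
      then show ?thesis using j by (simp add: coeff_lambda_coeff coeff_eq_0)
    qed (simp add: coeff_lambda_coeff coeff_eq_0)
  qed
qed

lemma nprod_add_left: "nprod n (U + U') W = nprod n U W + nprod n U' W"
  by (simp add: nprod_def lprod_add_left lambda_coeff_add smult_add_right)

lemma nprod_add_right: "nprod n U (W + W') = nprod n U W + nprod n U W'"
  by (simp add: nprod_def lprod_add_right lambda_coeff_add smult_add_right)

lemma nprod_const_left: "nprod n (smult [:c:] U) W = smult [:c:] (nprod n U W)"
  by (simp add: nprod_def lprod_const_left lambda_coeff_const mult.commute)

lemma nprod_const_right: "nprod n U (smult [:c:] W) = smult [:c:] (nprod n U W)"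
  by (simp add: nprod_def lprod_const_right lambda_coeff_const mult.commute)

lemma nprod_der_left: "nprod n (smult [:0, 1:] U) W = smult [:- of_nat n:] (nprod (n - 1) U W)"
  by (cases n) (simp_all add: nprod_def lprod_der_left lambda_coeff_neg_lambda algebra_simps
      flip: smult_const_neg)

lemma nprod_der_right:
  "nprod n U (smult [:0, 1:] W) =
     smult [:0, 1:] (nprod n U W) + smult [:of_nat n:] (nprod (n - 1) U W)"
  by (cases n) (simp_all add: nprod_def lprod_der_right lambda_coeff_shift smult_add_right
      mult.commute mult.left_commute)

lemma nprod_x_left: "nprod n (pCons 0 U) W = pCons 0 (nprod n U W)"
  by (simp add: nprod_def lprod_x_left lambda_coeff_x)

lemma nprod_x_right:
  "nprod n U (pCons 0 W) = pCons 0 (nprod n U W) + smult [:of_nat n:] (nprod (n - 1) U W)"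
  by (cases n) (simp_all add: nprod_def lprod_x_right lambda_coeff_add lambda_coeff_x
      lambda_coeff_lambda smult_add_right mult.commute)

lemma nprod_1_1: "nprod n 1 1 = (if n = 0 then 1 else 0)"
  by (simp add: nprod_def lprod_1_1 lambda_coeff_1 const_const_one)

lemma nprod_0_left [simp]: "nprod n 0 W = 0"
  and nprod_0_right [simp]: "nprod n U 0 = 0"
  by (simp_all add: nprod_def lprod_def)

lemma degree_nprod: "degree (nprod k U W) \<le> degree U + degree W"
  using degree_smult_le[of "[:fact k:]" "lambda_coeff k (lprod U W)"]
    degree_lambda_coeff_le[of k "lprod U W"] degree_lprod[of U W]
  unfolding nprod_def by linarith

lemma pv_induct:
  fixes P :: "'k::field_char_0 pv \<Rightarrow> bool"
  assumes one: "P 1"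
    and const: "\<And>c U. P U \<Longrightarrow> P (smult [:c:] U)"
    and add: "\<And>U V. P U \<Longrightarrow> P V \<Longrightarrow> P (U + V)"
    and x: "\<And>U. P U \<Longrightarrow> P (pCons 0 U)"
    and der: "\<And>U. P U \<Longrightarrow> P (smult [:0, 1:] U)"
  shows "P U"
proof -
  have c: "P [:c:]" for c :: "'k poly"
  proof (induct c)
    case 0
    show ?case using const[OF one, of 0] by simp
  next
    case (pCons a c)
    have "[:pCons a c:] = smult [:a:] 1 + smult [:0, 1:] [:c:]" by (simp add: one_pCons)
    then show ?case using add[OF const[OF one] der[OF pCons(2)]] by simp
  qed
  show ?thesis
  proof (induct U)
    case 0 show ?case using c[of 0] by simp
  next
    case (pCons c U)
    have "pCons c U = [:c:] + pCons 0 U" by simp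
    then show ?case using add[OF c x[OF pCons(2)]] by simp
  qed
qed

lemma nprod_0_1_left: "nprod 0 1 V = (V :: 'k::field_char_0 pv)"
  by (induct V rule: pv_induct)
    (simp_all add: nprod_1_1 nprod_const_right nprod_add_right nprod_x_right nprod_der_right)

section \<open>Associativity of the n-products\<close>

lemma sum_index_times_binomial:
  fixes h :: "nat \<Rightarrow> 'k::field_char_0 pv"
  shows "(\<Sum>j<Suc n. smult [:of_nat (j * (n choose j)):] (h j)) =
     smult [:of_nat n:] (\<Sum>i<n. smult [:of_nat (n - 1 choose i):] (h (Suc i)))"
proof (cases n)
  case 0 then show ?thesis by simp
next
  case (Suc k)
  have "(\<Sum>j<Suc n. smult [:of_nat (j * (n choose j)):] (h j)) =
        (\<Sum>i<n. smult [:of_nat (Suc i * (n choose Suc i)):] (h (Suc i)))"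
    by (subst sum.lessThan_Suc_shift) simp
  also have "\<dots> = (\<Sum>i<n. smult [:of_nat n:] (smult [:of_nat (n - 1 choose i):] (h (Suc i))))"
  proof (rule sum.cong)
    fix i
    have e: "Suc i * (n choose Suc i) = n * (n - 1 choose i)"
      using Suc Suc_times_binomial[of i k] by simp
    show "smult [:of_nat (Suc i * (n choose Suc i)):] (h (Suc i)) =
      smult [:of_nat n:] (smult [:of_nat (n - 1 choose i):] (h (Suc i)))"
      by (simp only: e smult_const_const of_nat_mult)
  qed simp
  finally show ?thesis by (simp add: smult_sum_right)
qed

lemma sum_coindex_times_binomial:
  fixes g :: "nat \<Rightarrow> 'k::field_char_0 pv"
  shows "(\<Sum>j<Suc n. smult [:of_nat ((n - j) * (n choose j)):] (g j)) =
     smult [:of_nat n:] (\<Sum>i<n. smult [:of_nat (n - 1 choose i):] (g i))"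
proof -
  have "(\<Sum>j<Suc n. smult [:of_nat ((n - j) * (n choose j)):] (g j)) =
        (\<Sum>j<n. smult [:of_nat ((n - j) * (n choose j)):] (g j))"
    by simp
  also have "\<dots> = (\<Sum>i<n. smult [:of_nat n:] (smult [:of_nat (n - 1 choose i):] (g i)))"
  proof (rule sum.cong)
    fix i
    have e: "(n - i) * (n choose i) = n * (n - 1 choose i)" by (rule binomial_absorb_comp)
    show "smult [:of_nat ((n - i) * (n choose i)):] (g i) =
      smult [:of_nat n:] (smult [:of_nat (n - 1 choose i):] (g i))"
      by (simp only: e smult_const_const of_nat_mult)
  qed simp
  finally show ?thesis by (simp add: smult_sum_right)
qed

text \<open>Associativity is verified on generators: both sides are additive, commute with constants,
  and transform in the same way when any argument is multiplied by x or by \<partial>; so everything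
  reduces to U = W = Z = 1.\<close>
definition assoc_rhs :: "'k::field_char_0 pv \<Rightarrow> 'k pv \<Rightarrow> 'k pv \<Rightarrow> nat \<Rightarrow> nat \<Rightarrow> 'k pv" where
  "assoc_rhs U W Z n m =
     (\<Sum>j<Suc n. smult [:of_nat (n choose j):] (nprod (m + n - j) (nprod j U W) Z))"

definition nprod_assoc_at :: "'k::field_char_0 pv \<Rightarrow> 'k pv \<Rightarrow> 'k pv \<Rightarrow> bool" where
  "nprod_assoc_at U W Z \<longleftrightarrow> (\<forall>n m. nprod n U (nprod m W Z) = assoc_rhs U W Z n m)"

lemma nprod_assoc_at_add_left:
    "nprod_assoc_at U W Z \<Longrightarrow> nprod_assoc_at U' W Z \<Longrightarrow> nprod_assoc_at (U + U') W Z"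
  and nprod_assoc_at_add_mid:
    "nprod_assoc_at U W Z \<Longrightarrow> nprod_assoc_at U W' Z \<Longrightarrow> nprod_assoc_at U (W + W') Z"
  and nprod_assoc_at_add_right:
    "nprod_assoc_at U W Z \<Longrightarrow> nprod_assoc_at U W Z' \<Longrightarrow> nprod_assoc_at U W (Z + Z')"
  by (simp_all add: nprod_assoc_at_def assoc_rhs_def nprod_add_left nprod_add_right smult_add_right
      sum.distrib)

lemma assoc_rhs_const_left: "assoc_rhs (smult [:c:] U) W Z n m = smult [:c:] (assoc_rhs U W Z n m)"
  and assoc_rhs_const_mid: "assoc_rhs U (smult [:c:] W) Z n m = smult [:c:] (assoc_rhs U W Z n m)"
  and assoc_rhs_const_right: "assoc_rhs U W (smult [:c:] Z) n m = smult [:c:] (assoc_rhs U W Z n m)"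
  unfolding assoc_rhs_def smult_sum_right
  by (rule sum.cong; simp add: nprod_const_left nprod_const_right mult.commute)+

lemma nprod_assoc_at_const_left: "nprod_assoc_at U W Z \<Longrightarrow> nprod_assoc_at (smult [:c:] U) W Z"
  and nprod_assoc_at_const_mid: "nprod_assoc_at U W Z \<Longrightarrow> nprod_assoc_at U (smult [:c:] W) Z"
  and nprod_assoc_at_const_right: "nprod_assoc_at U W Z \<Longrightarrow> nprod_assoc_at U W (smult [:c:] Z)"
  by (simp_all add: nprod_assoc_at_def assoc_rhs_const_left assoc_rhs_const_mid
      assoc_rhs_const_right nprod_const_left nprod_const_right)

lemma nprod_assoc_at_x_left: "nprod_assoc_at U W Z \<Longrightarrow> nprod_assoc_at (pCons 0 U) W Z"
  by (simp add: nprod_assoc_at_def assoc_rhs_def nprod_x_left sum_pCons_0)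

lemma nprod_assoc_at_der_left:
  assumes "nprod_assoc_at U W Z"
  shows "nprod_assoc_at (smult [:0, 1:] U) W Z"
  unfolding nprod_assoc_at_def
proof (intro allI)
  fix n m
  let ?h = "\<lambda>j. nprod (m + n - j) (nprod (j - 1) U W) Z"
  have "assoc_rhs (smult [:0, 1:] U) W Z n m =
      (\<Sum>j<Suc n. smult [:- 1:] (smult [:of_nat (j * (n choose j)):] (?h j)))"
    unfolding assoc_rhs_def
    by (rule sum.cong) (simp_all add: nprod_der_left nprod_const_left mult.commute)
  also have "\<dots> =
      smult [:- 1:] (smult [:of_nat n:] (\<Sum>i<n. smult [:of_nat (n - 1 choose i):] (?h (Suc i))))"
    by (simp only: sum_index_times_binomial flip: smult_sum_right)
  also have "\<dots> = nprod n (smult [:0, 1:] U) (nprod m W Z)"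
    using assms by (cases n) (simp_all add: nprod_der_left nprod_assoc_at_def assoc_rhs_def)
  finally show "nprod n (smult [:0, 1:] U) (nprod m W Z) = assoc_rhs (smult [:0, 1:] U) W Z n m"
    by simp
qed

lemma nprod_assoc_at_x_mid:
  assumes "nprod_assoc_at U W Z"
  shows "nprod_assoc_at U (pCons 0 W) Z"
  unfolding nprod_assoc_at_def
proof (intro allI)
  fix n m
  let ?h = "\<lambda>j. nprod (m + n - j) (nprod (j - 1) U W) Z"
  have "assoc_rhs U (pCons 0 W) Z n m =
      (\<Sum>j<Suc n. pCons 0 (smult [:of_nat (n choose j):] (nprod (m + n - j) (nprod j U W) Z))
        + smult [:of_nat (j * (n choose j)):] (?h j))"
    unfolding assoc_rhs_def
    by (rule sum.cong) (simp_all add: nprod_x_right nprod_add_left nprod_x_left nprod_const_left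
        smult_add_right mult.commute)
  also have "\<dots> =
      pCons 0 (assoc_rhs U W Z n m) + (\<Sum>j<Suc n. smult [:of_nat (j * (n choose j)):] (?h j))"
    by (simp only: sum.distrib sum_pCons_0 assoc_rhs_def)
  also have "\<dots> = pCons 0 (assoc_rhs U W Z n m)
      + smult [:of_nat n:] (\<Sum>i<n. smult [:of_nat (n - 1 choose i):] (?h (Suc i)))"
    by (simp only: sum_index_times_binomial)
  also have "\<dots> = nprod n U (nprod m (pCons 0 W) Z)"
    using assms by (cases n) (simp_all add: nprod_x_left nprod_x_right nprod_assoc_at_def
        assoc_rhs_def)
  finally show "nprod n U (nprod m (pCons 0 W) Z) = assoc_rhs U (pCons 0 W) Z n m" by simp
qed

lemma nprod_assoc_at_der_mid:
  assumes "nprod_assoc_at U W Z"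
  shows "nprod_assoc_at U (smult [:0, 1:] W) Z"
  unfolding nprod_assoc_at_def
proof (intro allI)
  fix n m
  let ?h = "\<lambda>j. nprod (m + n - j) (nprod (j - 1) U W) Z"
  let ?g = "\<lambda>j. nprod (m + n - j - 1) (nprod j U W) Z"
  let ?A = "\<lambda>j. smult [:of_nat (m * (n choose j)):] (?g j)"
  let ?B = "\<lambda>j. smult [:of_nat ((n - j) * (n choose j)):] (?g j)"
  let ?C = "\<lambda>j. smult [:of_nat (j * (n choose j)):] (?h j)"
  have "assoc_rhs U (smult [:0, 1:] W) Z n m =
      (\<Sum>j<Suc n. smult [:-1:] (?A j) + smult [:-1:] (?B j) + ?C j)"
    unfolding assoc_rhs_def
  proof (rule sum.cong)
    fix j assume "j \<in> {..<Suc n}"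
    then have j: "j \<le> n" by simp
    then have e: "(of_nat (m + n - j) :: 'a) = of_nat m + of_nat (n - j)" by (simp add: of_nat_diff)
    show "smult [:of_nat (n choose j):] (nprod (m + n - j) (nprod j U (smult [:0, 1:] W)) Z) =
        smult [:-1:] (?A j) + smult [:-1:] (?B j) + ?C j"
      by (simp add: nprod_der_right nprod_add_left nprod_der_left nprod_const_left smult_add_right
          e of_nat_diff[OF j] algebra_simps flip: smult_const_neg smult_add_left)
  qed simp
  also have "\<dots> =
      smult [:-1:] (\<Sum>j<Suc n. ?A j) + smult [:-1:] (\<Sum>j<Suc n. ?B j) + (\<Sum>j<Suc n. ?C j)"
    by (simp only: sum.distrib smult_sum_right)
  also have "(\<Sum>j<Suc n. ?B j) = (\<Sum>j<Suc n. ?C j)"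
    by (simp only: sum_index_times_binomial sum_coindex_times_binomial) (simp add: algebra_simps)
  also have "smult [:-1:] (\<Sum>j<Suc n. ?A j) + smult [:-1:] (\<Sum>j<Suc n. ?C j) + (\<Sum>j<Suc n. ?C j)
      = smult [:-1:] (\<Sum>j<Suc n. ?A j)"
    by (simp add: smult_const_neg del: sum.lessThan_Suc)
  also have "\<dots> = smult [:- of_nat m:] (\<Sum>j<Suc n. smult [:of_nat (n choose j):] (?g j))"
    by (simp add: smult_sum_right smult_const_neg mult.commute del: sum.lessThan_Suc)
  also have "\<dots> = nprod n U (nprod m (smult [:0, 1:] W) Z)"
    using assms by (cases m) (simp_all add: nprod_der_left nprod_const_right nprod_assoc_at_def
        assoc_rhs_def)
  finally show "nprod n U (nprod m (smult [:0, 1:] W) Z) = assoc_rhs U (smult [:0, 1:] W) Z n m"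
    by simp
qed

lemma nprod_assoc_at_derivation_right:
  fixes E :: "'k::field_char_0 pv \<Rightarrow> 'k pv"
  assumes E_add: "\<And>a b. E (a + b) = E a + E b"
    and E_const: "\<And>c a. E (smult [:c:] a) = smult [:c:] (E a)"
    and E_leibniz:
      "\<And>k A B. nprod k A (E B) = E (nprod k A B) + smult [:of_nat k:] (nprod (k - 1) A B)"
    and assoc: "nprod_assoc_at U W Z"
  shows "nprod_assoc_at U W (E Z)"
  unfolding nprod_assoc_at_def
proof (intro allI)
  fix n m
  have E_sum: "E (sum f A) = (\<Sum>x\<in>A. E (f x))" for f and A :: "nat set"
    using E_add[of 0 0] by (induct A rule: infinite_finite_induct) (simp_all add: E_add)
  let ?T = "\<lambda>j. nprod (m + n - j) (nprod j U W) Z"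
  let ?g = "\<lambda>j. nprod (m + n - j - 1) (nprod j U W) Z"
  have "assoc_rhs U W (E Z) n m =
      (\<Sum>j<Suc n. E (smult [:of_nat (n choose j):] (?T j))
        + (smult [:of_nat m:] (smult [:of_nat (n choose j):] (?g j))
          + smult [:of_nat ((n - j) * (n choose j)):] (?g j)))"
    unfolding assoc_rhs_def
  proof (rule sum.cong)
    fix j assume "j \<in> {..<Suc n}"
    then have j: "j \<le> n" by simp
    then have e: "(of_nat (m + n - j) :: 'k) = of_nat m + of_nat (n - j)" by (simp add: of_nat_diff)
    show "smult [:of_nat (n choose j):] (nprod (m + n - j) (nprod j U W) (E Z)) =
        E (smult [:of_nat (n choose j):] (?T j))
          + (smult [:of_nat m:] (smult [:of_nat (n choose j):] (?g j))
            + smult [:of_nat ((n - j) * (n choose j)):] (?g j))"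
      by (simp add: E_leibniz E_const e of_nat_diff[OF j] smult_add_right algebra_simps
          flip: smult_add_left)
  qed simp
  also have "\<dots> = E (assoc_rhs U W Z n m)
      + smult [:of_nat m:] (\<Sum>j<Suc n. smult [:of_nat (n choose j):] (?g j))
      + smult [:of_nat n:] (\<Sum>i<n. smult [:of_nat (n - 1 choose i):] (?g i))"
    by (simp only: sum.distrib E_sum assoc_rhs_def smult_sum_right add.assoc
        sum_coindex_times_binomial)
  also have "smult [:of_nat m:] (\<Sum>j<Suc n. smult [:of_nat (n choose j):] (?g j)) =
      smult [:of_nat m:] (assoc_rhs U W Z n (m - 1))"
    by (cases m) (simp_all add: assoc_rhs_def del: sum.lessThan_Suc)
  also have "smult [:of_nat n:] (\<Sum>i<n. smult [:of_nat (n - 1 choose i):] (?g i)) =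
      smult [:of_nat n:] (assoc_rhs U W Z (n - 1) m)"
    by (cases n) (simp_all add: assoc_rhs_def del: sum.lessThan_Suc)
  also have "E (assoc_rhs U W Z n m) + smult [:of_nat m:] (assoc_rhs U W Z n (m - 1))
      + smult [:of_nat n:] (assoc_rhs U W Z (n - 1) m) = nprod n U (nprod m W (E Z))"
    using assoc by (simp add: nprod_assoc_at_def E_leibniz nprod_add_right nprod_const_right)
  finally show "nprod n U (nprod m W (E Z)) = assoc_rhs U W (E Z) n m" by simp
qed

lemma nprod_assoc_at_x_right: "nprod_assoc_at U W Z \<Longrightarrow> nprod_assoc_at U W (pCons 0 Z)"
  by (rule nprod_assoc_at_derivation_right[where E = "pCons 0"])
    (simp_all add: smult_pCons nprod_x_right)

lemma nprod_assoc_at_der_right: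
  "nprod_assoc_at U W Z \<Longrightarrow> nprod_assoc_at U W (smult [:0, 1:] Z)"
  by (rule nprod_assoc_at_derivation_right[where E = "smult [:0, 1:]"])
    (simp_all add: smult_add_right mult.commute nprod_der_right)

lemma nprod_assoc_at_1_1_1: "nprod_assoc_at 1 1 (1 :: 'k::field_char_0 pv)"
  unfolding nprod_assoc_at_def
proof (intro allI)
  fix n m
  show "nprod n 1 (nprod m 1 1) = assoc_rhs 1 1 (1 :: 'k pv) n m"
  proof (cases n)
    case (Suc k)
    have "assoc_rhs 1 1 1 n m = (\<Sum>j<Suc n. if j = 0 then nprod (m + n) 1 (1 :: 'k pv) else 0)"
      unfolding assoc_rhs_def by (rule sum.cong) (simp_all add: nprod_1_1)
    then show ?thesis using Suc by (simp add: nprod_1_1)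
  qed (simp add: assoc_rhs_def nprod_1_1)
qed

lemma nprod_assoc: "nprod n U (nprod m W Z) = assoc_rhs U W Z n m"
proof -
  have "nprod_assoc_at 1 1 Z" for Z :: "'a pv"
    by (induct Z rule: pv_induct) (auto intro: nprod_assoc_at_1_1_1 nprod_assoc_at_const_right
        nprod_assoc_at_add_right nprod_assoc_at_x_right nprod_assoc_at_der_right)
  then have "nprod_assoc_at 1 W Z" for W Z :: "'a pv"
    by (induct W rule: pv_induct) (auto intro: nprod_assoc_at_const_mid nprod_assoc_at_add_mid
        nprod_assoc_at_x_mid nprod_assoc_at_der_mid)
  then have "nprod_assoc_at U W Z"
    by (induct U rule: pv_induct) (auto intro: nprod_assoc_at_const_left nprod_assoc_at_add_left
        nprod_assoc_at_x_left nprod_assoc_at_der_left)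
  then show ?thesis by (simp add: nprod_assoc_at_def)
qed

section \<open>Interpretation of terms\<close>

fun interp :: "'k::field_char_0 ct \<Rightarrow> 'k pv" where
  "interp Gen = pCons 0 1"
| "interp Zer = 0"
| "interp (Add a b) = interp a + interp b"
| "interp (Sml c a) = smult [:c:] (interp a)"
| "interp (Der a) = smult [:0, 1:] (interp a)"
| "interp (Prd n a b) = nprod n (interp a) (interp b)"

lemma interp_tsum: "interp (tsum xs) = sum_list (map interp xs)"
  by (induct xs) (simp_all add: tsum_def)

lemma interp_Sub: "interp (Sub a b) = interp a - interp b"
  by (simp add: Sub_def smult_const_neg)

lemma interp_ders: "interp (ders i x) = smult ([:0, 1:] ^ i) (interp x)"
  by (induct i) (simp_all add: ders_def)

lemma nprod_x_x:
  "nprod n (pCons 0 1) (pCons 0 (1::'k::field_char_0 pv)) =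
     (if n = 0 then pCons 0 (pCons 0 1) else if n = 1 then pCons 0 1 else 0)"
  by (simp add: nprod_x_left nprod_x_right nprod_1_1 const_const_one)

lemma smult_const_add: "smult [:a + b:] (x::'k::field_char_0 pv) = smult [:a:] x + smult [:b:] x"
  by (rule poly_eqI) (simp add: smult_add_left)

lemma interp_sound: "ceq 2 s t \<Longrightarrow> interp s = interp (t :: 'k::field_char_0 ct)"
proof (induct rule: ceq.induct)
  case (prd_assoc n x m y z)
  have "interp (Prd n x (Prd m y z)) = assoc_rhs (interp x) (interp y) (interp z) n m"
    by (simp add: nprod_assoc)
  also have "\<dots> = interp (tsum
      (map (\<lambda>j. Sml (of_nat (n choose j)) (Prd (m + n - j) (Prd j x y) z)) [0..<Suc n]))"
    by (simp add: interp_tsum assoc_rhs_def interv_sum_list_conv_sum_set_nat o_def atLeast0LessThan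
        del: upt_Suc)
  finally show ?case .
next
  case (rel_loc n)
  then show ?case by (simp add: nprod_x_x)
next
  case (rel_vir k)
  consider "k = 0" | "k = 1" | "2 \<le> k" by linarith
  then show ?case
  proof cases
    case 2
    then show ?thesis
      by (simp add: interp_Sub interp_tsum interp_ders nprod_x_x virrhs_def numeral_2_eq_2
          flip: smult_diff_left) (simp flip: const_const_one)
  qed (simp_all add: interp_Sub interp_tsum interp_ders nprod_x_x virrhs_def numeral_2_eq_2
      const_const_one)
qed (simp_all add: smult_const_add nprod_add_left nprod_add_right nprod_const_left nprod_const_right
    nprod_der_left nprod_der_right smult_add_right smult_add_left algebra_simps)

lemma interp_L0v: "interp (L0v a) = (monom 1 (Suc a) :: 'k::field_char_0 pv)"
  by (induct a) (simp_all add: L0v_def nprod_x_left nprod_0_1_left monom_Suc monom_0)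

lemma interp_item:
  "interp (Sml c (ders i (L0v a))) = (monom (monom c i) (Suc a) :: 'k::field_char_0 pv)"
  by (simp add: interp_ders interp_L0v smult_monom monom_altdef)

lemma interp_pact: "interp (pact p Y) = smult p (interp (Y :: 'k::field_char_0 ct))"
proof -
  have "interp (pact p Y) =
      (\<Sum>i\<in>{0..<Suc (degree p)}. smult [:coeff p i:] (smult ([:0, 1:] ^ i) (interp Y)))"
    by (simp add: pact_def interp_tsum interp_ders interv_sum_list_conv_sum_set_nat o_def
        del: upt_Suc)
  also have "\<dots> = (\<Sum>i\<le>degree p. smult (monom (coeff p i) i) (interp Y))"
    by (simp add: atLeast0LessThan lessThan_Suc_atMost monom_altdef)
  also have "\<dots> = smult p (interp Y)" by (simp add: poly_as_sum_of_monoms flip: smult_sum)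
  finally show ?thesis .
qed

lemma degree_interp_mono: "degree (interp (mono ns) :: 'k::field_char_0 pv) \<le> Suc (length ns)"
proof (induct ns)
  case (Cons n ns)
  then show ?case using degree_nprod[of n "pCons 0 1" "interp (mono ns) :: 'k pv"] by simp
qed simp

section \<open>Computing in U(Vir; v, 2)\<close>

declare ceq.trans[trans]

lemma ceq_add_zero_right: "ceq N (Add x Zer) x"
  by (meson ceq.add_comm ceq.add_zero ceq.trans)

lemma ceq_sml_Zer: "ceq N (Sml c Zer) Zer"
proof -
  have "ceq N (Sml c Zer) (Sml c (Sml 0 Zer))" by (rule ceq.cSml, rule ceq.sym, rule ceq.sml_zero)
  also have "ceq N \<dots> (Sml (c * 0) Zer)" by (rule ceq.sml_sml)
  also have "ceq N ... Zer" using ceq.sml_zero by simp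
  finally show ?thesis .
qed

lemma ceq_der_Zer: "ceq N (Der Zer) Zer"
proof -
  have "ceq N (Der Zer) (Der (Sml 0 Zer))" by (rule ceq.cDer, rule ceq.sym, rule ceq.sml_zero)
  also have "ceq N \<dots> (Sml 0 (Der Zer))" by (rule ceq.der_sml)
  also have "ceq N ... Zer" by (rule ceq.sml_zero)
  finally show ?thesis .
qed

lemma ceq_prd_Zer_left: "ceq N (Prd n Zer y) Zer"
proof -
  have "ceq N (Prd n Zer y) (Prd n (Sml 0 Zer) y)"
    by (rule ceq.cPrd, rule ceq.sym, rule ceq.sml_zero, rule ceq.refl)
  also have "ceq N \<dots> (Sml 0 (Prd n Zer y))" by (rule ceq.prd_smll)
  also have "ceq N ... Zer" by (rule ceq.sml_zero)
  finally show ?thesis .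
qed

lemma ceq_prd_Zer_right: "ceq N (Prd n x Zer) Zer"
proof -
  have "ceq N (Prd n x Zer) (Prd n x (Sml 0 Zer))"
    by (rule ceq.cPrd, rule ceq.refl, rule ceq.sym, rule ceq.sml_zero)
  also have "ceq N \<dots> (Sml 0 (Prd n x Zer))" by (rule ceq.prd_smlr)
  also have "ceq N ... Zer" by (rule ceq.sml_zero)
  finally show ?thesis .
qed

lemma tsum_Nil[simp]: "tsum [] = Zer" and tsum_Cons[simp]: "tsum (x # xs) = Add x (tsum xs)"
  by (simp_all add: tsum_def)

lemma ceq_tsum_append: "ceq N (tsum (xs @ ys)) (Add (tsum xs) (tsum ys))"
proof (induct xs)
  case Nil show ?case by simp (rule ceq.sym, rule ceq.add_zero)
next
  case (Cons x xs)
  have "ceq N (tsum ((x # xs) @ ys)) (Add x (Add (tsum xs) (tsum ys)))"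
    using Cons by (simp add: ceq.cAdd ceq.refl)
  also have "ceq N \<dots> (Add (Add x (tsum xs)) (tsum ys))" by (rule ceq.sym, rule ceq.add_assoc)
  finally show ?case by simp
qed

lemma ceq_tsum_cong:
  "(\<And>x. x \<in> set xs \<Longrightarrow> ceq N (f x) (g x)) \<Longrightarrow> ceq N (tsum (map f xs)) (tsum (map g xs))"
  by (induct xs) (simp_all add: ceq.refl ceq.cAdd)

lemma ceq_sml_tsum: "ceq N (Sml c (tsum xs)) (tsum (map (Sml c) xs))"
proof (induct xs)
  case Nil show ?case by (simp add: ceq_sml_Zer)
next
  case (Cons x xs)
  then show ?case by simp (rule ceq.trans, rule ceq.sml_distr, rule ceq.cAdd, rule ceq.refl)
qed

lemma ceq_der_tsum: "ceq N (Der (tsum xs)) (tsum (map Der xs))"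
proof (induct xs)
  case Nil show ?case by (simp add: ceq_der_Zer)
next
  case (Cons x xs)
  then show ?case by simp (rule ceq.trans, rule ceq.der_add, rule ceq.cAdd, rule ceq.refl)
qed

lemma ceq_prd_tsum_left: "ceq N (Prd n (tsum xs) y) (tsum (map (\<lambda>x. Prd n x y) xs))"
proof (induct xs)
  case Nil show ?case by (simp add: ceq_prd_Zer_left)
next
  case (Cons x xs)
  then show ?case by simp (rule ceq.trans, rule ceq.prd_addl, rule ceq.cAdd, rule ceq.refl)
qed

lemma ceq_prd_tsum_right: "ceq N (Prd n x (tsum ys)) (tsum (map (\<lambda>y. Prd n x y) ys))"
proof (induct ys)
  case Nil show ?case by (simp add: ceq_prd_Zer_right)
next
  case (Cons y ys)
  then show ?case by simp (rule ceq.trans, rule ceq.prd_addr, rule ceq.cAdd, rule ceq.refl)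
qed

lemma ceq_tsum_concat: "ceq N (tsum (concat xss)) (tsum (map tsum xss))"
proof (induct xss)
  case Nil show ?case by (simp add: ceq.refl)
next
  case (Cons xs xss)
  show ?case by simp (rule ceq.trans, rule ceq_tsum_append, rule ceq.cAdd, rule ceq.refl, rule Cons)
qed

lemma ceq_tsum_Zer: "(\<And>x. x \<in> set xs \<Longrightarrow> ceq N x Zer) \<Longrightarrow> ceq N (tsum xs) Zer"
proof (induct xs)
  case Nil show ?case by (simp add: ceq.refl)
next
  case (Cons x xs)
  have "ceq N (tsum (x # xs)) (Add Zer Zer)" using Cons by (simp add: ceq.cAdd)
  also have "ceq N \<dots> Zer" by (rule ceq.add_zero)
  finally show ?case .
qed

lemma ceq_add_swap: "ceq N (Add (Add a b) (Add c d)) (Add (Add a c) (Add b d))"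
proof -
  have "ceq N (Add (Add a b) (Add c d)) (Add a (Add b (Add c d)))" by (rule ceq.add_assoc)
  also have "ceq N \<dots> (Add a (Add (Add b c) d))"
    by (rule ceq.cAdd, rule ceq.refl, rule ceq.sym, rule ceq.add_assoc)
  also have "ceq N \<dots> (Add a (Add (Add c b) d))"
    by (rule ceq.cAdd, rule ceq.refl, rule ceq.cAdd, rule ceq.add_comm, rule ceq.refl)
  also have "ceq N \<dots> (Add a (Add c (Add b d)))"
    by (rule ceq.cAdd, rule ceq.refl, rule ceq.add_assoc)
  also have "ceq N \<dots> (Add (Add a c) (Add b d))" by (rule ceq.sym, rule ceq.add_assoc)
  finally show ?thesis .
qed

lemma ceq_tsum_add:
  "ceq N (tsum (map (\<lambda>x. Add (f x) (g x)) xs)) (Add (tsum (map f xs)) (tsum (map g xs)))"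
proof (induct xs)
  case Nil show ?case by simp (rule ceq.sym, rule ceq.add_zero)
next
  case (Cons x xs)
  have "ceq N (tsum (map (\<lambda>x. Add (f x) (g x)) (x # xs)))
      (Add (Add (f x) (g x)) (Add (tsum (map f xs)) (tsum (map g xs))))"
    using Cons by (simp add: ceq.cAdd ceq.refl)
  also have "ceq N \<dots> (Add (Add (f x) (tsum (map f xs))) (Add (g x) (tsum (map g xs))))"
    by (rule ceq_add_swap)
  finally show ?case by simp
qed

lemma ceq_tsum_single:
  "distinct xs \<Longrightarrow> x0 \<in> set xs \<Longrightarrow> (\<And>x. x \<in> set xs \<Longrightarrow> x \<noteq> x0 \<Longrightarrow> ceq N (f x) Zer) \<Longrightarrow>
    ceq N (tsum (map f xs)) (f x0)"
proof (induct xs)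
  case Nil then show ?case by simp
next
  case (Cons x xs)
  show ?case
  proof (cases "x = x0")
    case True
    then have "x0 \<notin> set xs" using Cons by simp
    then have "ceq N (tsum (map f xs)) Zer" using Cons by (intro ceq_tsum_Zer) auto
    then have "ceq N (tsum (map f (x # xs))) (Add (f x0) Zer)"
      using True by (simp add: ceq.cAdd ceq.refl)
    also have "ceq N \<dots> (f x0)" by (rule ceq_add_zero_right)
    finally show ?thesis .
  next
    case False
    then have "ceq N (tsum (map f (x # xs))) (Add Zer (f x0))" using Cons by (simp add: ceq.cAdd)
    also have "ceq N \<dots> (f x0)" by (rule ceq.add_zero)
    finally show ?thesis .
  qed
qed

lemma ders_Suc: "ders (Suc i) x = Der (ders i x)"
  by (simp add: ders_def)

lemma ders_0[simp]: "ders 0 x = x"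
  by (simp add: ders_def)

lemma ceq_prd0_ders: "ceq N (Prd 0 x (ders i y)) (ders i (Prd 0 x y))"
proof (induct i)
  case 0 show ?case by (simp add: ceq.refl)
next
  case (Suc i)
  have "ceq N (Prd 0 x (ders (Suc i) y))
      (Add (Der (Prd 0 x (ders i y))) (Sml (of_nat 0) (Prd (0 - 1) x (ders i y))))"
    unfolding ders_Suc by (rule ceq.prd_derr)
  also have "ceq N \<dots> (Add (Der (Prd 0 x (ders i y))) Zer)"
    by (rule ceq.cAdd, rule ceq.refl) (simp add: ceq.sml_zero)
  also have "ceq N \<dots> (Der (Prd 0 x (ders i y)))" by (rule ceq_add_zero_right)
  also have "ceq N \<dots> (ders (Suc i) (Prd 0 x y))"
    unfolding ders_Suc by (rule ceq.cDer, rule Suc)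
  finally show ?case .
qed

lemma ceq_prd_prd0: "ceq N (Prd n (Prd 0 x y) z) (Prd 0 x (Prd n y z))"
proof -
  have "ceq N (Prd 0 x (Prd n y z))
      (tsum (map (\<lambda>j. Sml (of_nat (0 choose j)) (Prd (n + 0 - j) (Prd j x y) z)) [0..<Suc 0]))"
    by (rule ceq.prd_assoc)
  also have "ceq N \<dots> (Add (Sml 1 (Prd n (Prd 0 x y) z)) Zer)" by (simp add: ceq.refl)
  also have "ceq N \<dots> (Sml 1 (Prd n (Prd 0 x y) z))" by (rule ceq_add_zero_right)
  also have "ceq N \<dots> (Prd n (Prd 0 x y) z)" by (rule ceq.sml_one)
  finally show ?thesis by (rule ceq.sym)
qed

lemma ceq_sml_cancel:
  assumes "c \<noteq> 0" "ceq N (Sml c x) (Sml c y)"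
  shows "ceq N x y"
proof -
  have unit: "ceq N (Sml (inverse c) (Sml c z)) z" for z
  proof -
    have "ceq N (Sml (inverse c) (Sml c z)) (Sml 1 z)"
      using ceq.sml_sml[of N "inverse c" c z] assms(1) by simp
    then show ?thesis using ceq.sml_one by (rule ceq.trans)
  qed
  have "ceq N (Sml (inverse c) (Sml c x)) (Sml (inverse c) (Sml c y))"
    using assms(2) by (rule ceq.cSml)
  then show ?thesis using unit by (meson ceq.sym ceq.trans)
qed

text \<open>The defining relation for k = 1 reads v_(1) v + v_(1) v = 2 v.\<close>
lemma ceq_prd1_Gen: "ceq 2 (Prd 1 Gen Gen) (Gen :: 'k::field_char_0 ct)"
proof (rule ceq_sml_cancel)
  let ?P = "Prd 1 Gen Gen :: 'k ct"
  have "ceq 2 (Sub ?P (tsum (map (\<lambda>j. Sml ((-1) ^ j / fact (j - 1)) (ders (j - 1) (Prd j Gen Gen)))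
      [1..<2]))) (virrhs 1)"
    by (rule ceq.rel_vir)
  then have rel: "ceq 2 (Sub ?P (Add (Sml (-1) ?P) Zer)) (Sml 2 Gen)"
    by (simp add: numeral_2_eq_2 virrhs_def)
  have "ceq 2 (Sml 2 ?P) (Add (Sml 1 ?P) (Sml 1 ?P))"
    using ceq.sml_distl[of 2 1 1 ?P] by simp
  also have "ceq 2 \<dots> (Add ?P (Sml (-1) (Sml (-1) ?P)))"
  proof (rule ceq.cAdd)
    have "ceq 2 (Sml (-1) (Sml (-1) ?P)) (Sml ((-1) * (-1)) ?P)" by (rule ceq.sml_sml)
    then show "ceq 2 (Sml 1 ?P) (Sml (-1) (Sml (-1) ?P))" by (simp add: ceq.sym)
  qed (rule ceq.sml_one)
  also have "ceq 2 \<dots> (Sub ?P (Add (Sml (-1) ?P) Zer))"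
    unfolding Sub_def
    by (rule ceq.cAdd, rule ceq.refl, rule ceq.cSml, rule ceq.sym, rule ceq_add_zero_right)
  finally show "ceq 2 (Sml 2 ?P) (Sml 2 Gen)" using rel by (rule ceq.trans)
qed simp

section \<open>Spanning by the elements (L_0)^a v\<close>

lemma L0v_Suc: "L0v (Suc a) = Prd 0 Gen (L0v a)"
  by (simp add: L0v_def)

text \<open>A triple (c, i, a) stands for c \<partial>^i (L_0)^a v.\<close>
definition l0v_comb :: "('k::field_char_0 \<times> nat \<times> nat) list \<Rightarrow> 'k ct" where
  "l0v_comb L = tsum (map (\<lambda>(c, i, a). Sml c (ders i (L0v a))) L)"

definition l0v_spanned :: "'k::field_char_0 ct \<Rightarrow> bool" where
  "l0v_spanned t \<longleftrightarrow> (\<exists>L. ceq 2 t (l0v_comb L))"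

lemma l0v_spanned_cong: "ceq 2 s t \<Longrightarrow> l0v_spanned t \<Longrightarrow> l0v_spanned s"
  unfolding l0v_spanned_def by (meson ceq.trans)

lemma l0v_spanned_Zer: "l0v_spanned Zer"
  unfolding l0v_spanned_def by (rule exI[of _ "[]"]) (simp add: l0v_comb_def ceq.refl)

lemma l0v_spanned_L0v: "l0v_spanned (L0v a)"
  unfolding l0v_spanned_def
proof (rule exI[of _ "[(1, 0, a)]"])
  have "ceq 2 (L0v a) (Sml 1 (L0v a))" by (rule ceq.sym, rule ceq.sml_one)
  also have "ceq 2 \<dots> (Add (Sml 1 (L0v a)) Zer)" by (rule ceq.sym, rule ceq_add_zero_right)
  finally show "ceq 2 (L0v a) (l0v_comb [(1, 0, a)])" by (simp add: l0v_comb_def)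
qed

lemma l0v_spanned_Gen: "l0v_spanned Gen"
  using l0v_spanned_L0v[of 0] by (simp add: L0v_def)

lemma l0v_spanned_Add: "l0v_spanned s \<Longrightarrow> l0v_spanned t \<Longrightarrow> l0v_spanned (Add s t)"
  unfolding l0v_spanned_def
proof (elim exE)
  fix L1 L2 assume 1: "ceq 2 s (l0v_comb L1)" and 2: "ceq 2 t (l0v_comb L2)"
  have "ceq 2 (Add s t) (Add (l0v_comb L1) (l0v_comb L2))" using 1 2 by (rule ceq.cAdd)
  also have "ceq 2 \<dots> (l0v_comb (L1 @ L2))"
    unfolding l0v_comb_def map_append by (rule ceq.sym, rule ceq_tsum_append)
  finally show "\<exists>L. ceq 2 (Add s t) (l0v_comb L)" by blast
qed

lemma l0v_spanned_tsum: "(\<And>x. x \<in> set xs \<Longrightarrow> l0v_spanned x) \<Longrightarrow> l0v_spanned (tsum xs)"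
  by (induct xs) (simp_all add: l0v_spanned_Zer l0v_spanned_Add)

lemma l0v_spanned_Sml: "l0v_spanned t \<Longrightarrow> l0v_spanned (Sml c t)"
  unfolding l0v_spanned_def
proof (elim exE)
  fix L assume 1: "ceq 2 t (l0v_comb L)"
  have "ceq 2 (Sml c t) (Sml c (l0v_comb L))" using 1 by (rule ceq.cSml)
  also have "ceq 2 \<dots> (tsum (map (Sml c) (map (\<lambda>(c, i, a). Sml c (ders i (L0v a))) L)))"
    unfolding l0v_comb_def by (rule ceq_sml_tsum)
  also have "ceq 2 \<dots> (l0v_comb (map (\<lambda>(c', i, a). (c * c', i, a)) L))"
    unfolding l0v_comb_def map_map by (rule ceq_tsum_cong) (auto simp: ceq.sml_sml)
  finally show "\<exists>L. ceq 2 (Sml c t) (l0v_comb L)" by blast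
qed

lemma l0v_spanned_Der: "l0v_spanned t \<Longrightarrow> l0v_spanned (Der t)"
  unfolding l0v_spanned_def
proof (elim exE)
  fix L assume 1: "ceq 2 t (l0v_comb L)"
  have "ceq 2 (Der t) (Der (l0v_comb L))" using 1 by (rule ceq.cDer)
  also have "ceq 2 \<dots> (tsum (map Der (map (\<lambda>(c, i, a). Sml c (ders i (L0v a))) L)))"
    unfolding l0v_comb_def by (rule ceq_der_tsum)
  also have "ceq 2 \<dots> (l0v_comb (map (\<lambda>(c, i, a). (c, Suc i, a)) L))"
    unfolding l0v_comb_def map_map by (rule ceq_tsum_cong) (auto simp: ceq.der_sml ders_Suc)
  finally show "\<exists>L. ceq 2 (Der t) (l0v_comb L)" by blast
qed

lemma l0v_spanned_prd0_Gen: "l0v_spanned t \<Longrightarrow> l0v_spanned (Prd 0 Gen t)"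
  unfolding l0v_spanned_def
proof (elim exE)
  fix L assume 1: "ceq 2 t (l0v_comb L)"
  have "ceq 2 (Prd 0 Gen t) (Prd 0 Gen (l0v_comb L))" using 1 by (rule ceq.cPrd[OF ceq.refl])
  also have "ceq 2 \<dots> (tsum (map (Prd 0 Gen) (map (\<lambda>(c, i, a). Sml c (ders i (L0v a))) L)))"
    unfolding l0v_comb_def by (rule ceq_prd_tsum_right)
  also have "ceq 2 \<dots> (l0v_comb (map (\<lambda>(c, i, a). (c, i, Suc a)) L))"
    unfolding l0v_comb_def map_map
  proof (rule ceq_tsum_cong)
    fix x assume "x \<in> set L"
    obtain c i a where x: "x = (c, i, a)" by (cases x) auto
    have "ceq 2 (Prd 0 Gen (Sml c (ders i (L0v a)))) (Sml c (Prd 0 Gen (ders i (L0v a))))"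
      by (rule ceq.prd_smlr)
    also have "ceq 2 \<dots> (Sml c (ders i (L0v (Suc a))))"
      unfolding L0v_Suc by (rule ceq.cSml, rule ceq_prd0_ders)
    finally show "ceq 2 ((Prd 0 Gen \<circ> (\<lambda>(c, i, a). Sml c (ders i (L0v a)))) x)
        (((\<lambda>(c, i, a). Sml c (ders i (L0v a))) \<circ> (\<lambda>(c, i, a). (c, i, Suc a))) x)"
      by (simp add: x)
  qed
  finally show "\<exists>L. ceq 2 (Prd 0 Gen t) (l0v_comb L)" by blast
qed

lemma l0v_spanned_prd_Gen_L0v: "l0v_spanned (Prd n Gen (L0v b) :: 'k::field_char_0 ct)"
proof (induct b arbitrary: n)
  case 0
  show ?case
  proof (cases "n \<ge> 2")
    case True
    then show ?thesis
      by (simp add: L0v_def) (rule l0v_spanned_cong[OF ceq.rel_loc[OF True] l0v_spanned_Zer])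
  next
    case False
    then consider "n = 0" | "n = 1" by linarith
    then show ?thesis
    proof cases
      case 1 then show ?thesis using l0v_spanned_L0v[of 1] by (simp add: L0v_def)
    next
      case 2
      then show ?thesis
        using l0v_spanned_cong[OF ceq_prd1_Gen l0v_spanned_Gen] by (simp add: L0v_def)
    qed
  qed
next
  case (Suc b)
  let ?Z = "L0v b :: 'k ct"
  let ?terms =
    "map (\<lambda>j. Sml (of_nat (n choose j)) (Prd (0 + n - j) (Prd j Gen Gen) ?Z)) [0..<Suc n]"
  have "ceq 2 (Prd n Gen (L0v (Suc b))) (tsum ?terms)"
    unfolding L0v_Suc by (rule ceq.prd_assoc)
  moreover have "l0v_spanned (tsum ?terms)"
  proof (rule l0v_spanned_tsum)
    fix x assume "x \<in> set ?terms"
    then obtain j where x: "x = Sml (of_nat (n choose j)) (Prd (n - j) (Prd j Gen Gen) ?Z)" by auto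
    have "l0v_spanned (Prd (n - j) (Prd j Gen Gen) ?Z)"
    proof -
      consider "j = 0" | "j = 1" | "j \<ge> 2" by linarith
      then show ?thesis
      proof cases
        case 1
        then show ?thesis
          using l0v_spanned_cong[OF ceq_prd_prd0 l0v_spanned_prd0_Gen[OF Suc]] by simp
      next
        case 2
        then show ?thesis using l0v_spanned_cong[OF ceq.cPrd[OF ceq_prd1_Gen ceq.refl] Suc] by simp
      next
        case 3
        have "ceq 2 (Prd (n - j) (Prd j Gen Gen) ?Z) (Prd (n - j) Zer ?Z)"
          by (rule ceq.cPrd[OF ceq.rel_loc[OF 3] ceq.refl])
        also have "ceq 2 \<dots> Zer" by (rule ceq_prd_Zer_left)
        finally show ?thesis by (rule l0v_spanned_cong[OF _ l0v_spanned_Zer])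
      qed
    qed
    then show "l0v_spanned x" unfolding x by (rule l0v_spanned_Sml)
  qed
  ultimately show ?case by (rule l0v_spanned_cong)
qed

lemma l0v_spanned_prd_L0v: "l0v_spanned (Prd n (L0v a) (L0v b) :: 'k::field_char_0 ct)"
proof (induct a arbitrary: n)
  case 0 then show ?case using l0v_spanned_prd_Gen_L0v by (simp add: L0v_def)
next
  case (Suc a)
  show ?case
    unfolding L0v_Suc by (rule l0v_spanned_cong[OF ceq_prd_prd0 l0v_spanned_prd0_Gen[OF Suc]])
qed

lemma l0v_spanned_prd_ders_L0v:
  "l0v_spanned (Prd n (ders i (L0v a)) (ders l (L0v b)) :: 'k::field_char_0 ct)"
proof (induct i arbitrary: n)
  case 0
  show ?case
  proof (induct l arbitrary: n)
    case 0 then show ?case using l0v_spanned_prd_L0v by simp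
  next
    case (Suc l)
    show ?case
      unfolding ders_Suc
      by (rule l0v_spanned_cong[OF ceq.prd_derr
            l0v_spanned_Add[OF l0v_spanned_Der l0v_spanned_Sml]]) (rule Suc)+
  qed
next
  case (Suc i)
  show ?case unfolding ders_Suc by (rule l0v_spanned_cong[OF ceq.prd_derl l0v_spanned_Sml[OF Suc]])
qed

lemma l0v_spanned_Prd_l0v_comb:
  "l0v_spanned (Prd n (l0v_comb L1) (l0v_comb L2) :: 'k::field_char_0 ct)"
proof -
  have item: "l0v_spanned (Prd n (Sml c (ders i (L0v a))) (Sml c' (ders i' (L0v b))) :: 'k ct)"
    for c i a c' i' b
  proof -
    have "ceq 2 (Prd n (Sml c (ders i (L0v a))) (Sml c' (ders i' (L0v b))))
        (Sml c (Sml c' (Prd n (ders i (L0v a)) (ders i' (L0v b)))))"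
      by (rule ceq.trans[OF ceq.prd_smll ceq.cSml[OF ceq.prd_smlr]])
    then show ?thesis
      by (rule l0v_spanned_cong[OF _
            l0v_spanned_Sml[OF l0v_spanned_Sml[OF l0v_spanned_prd_ders_L0v]]])
  qed
  have row: "l0v_spanned (Prd n (Sml c (ders i (L0v a))) (l0v_comb L2) :: 'k ct)" for c i a
    unfolding l0v_comb_def
    by (rule l0v_spanned_cong[OF ceq_prd_tsum_right l0v_spanned_tsum]) (auto intro: item)
  show ?thesis
    unfolding l0v_comb_def[of L1]
    by (rule l0v_spanned_cong[OF ceq_prd_tsum_left l0v_spanned_tsum]) (auto intro: row)
qed

lemma l0v_spanned_Prd:
  assumes "l0v_spanned s" "l0v_spanned t"
  shows "l0v_spanned (Prd n s t :: 'k::field_char_0 ct)"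
proof -
  obtain L1 L2 where "ceq 2 s (l0v_comb L1)" "ceq 2 t (l0v_comb L2)"
    using assms l0v_spanned_def by blast
  then have "ceq 2 (Prd n s t) (Prd n (l0v_comb L1) (l0v_comb L2))" by (rule ceq.cPrd)
  then show ?thesis using l0v_spanned_Prd_l0v_comb by (rule l0v_spanned_cong)
qed

lemma l0v_spanned_all: "l0v_spanned (t :: 'k::field_char_0 ct)"
  by (induct t) (simp_all add: l0v_spanned_Gen l0v_spanned_Zer l0v_spanned_Add l0v_spanned_Sml
      l0v_spanned_Der l0v_spanned_Prd)

section \<open>Normal forms and faithfulness\<close>

definition pact_upto :: "nat \<Rightarrow> 'k::field_char_0 poly \<Rightarrow> 'k ct \<Rightarrow> 'k ct" where
  "pact_upto E p Y = tsum (map (\<lambda>i. Sml (coeff p i) (ders i Y)) [0..<E])"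

text \<open>The term read off from U: x^(a+1) becomes (L_0)^a v, keeping the monomials x^(a+1) \<partial>^i
  with a < A and i < E.\<close>
definition normal_term :: "nat \<Rightarrow> nat \<Rightarrow> 'k::field_char_0 pv \<Rightarrow> 'k ct" where
  "normal_term A E U = tsum (map (\<lambda>a. pact_upto E (coeff U (Suc a)) (L0v a)) [0..<A])"

lemma pact_upto_add: "ceq N (pact_upto E (p + q) Y) (Add (pact_upto E p Y) (pact_upto E q Y))"
proof -
  have "ceq N (pact_upto E (p + q) Y)
      (tsum (map (\<lambda>i. Add (Sml (coeff p i) (ders i Y)) (Sml (coeff q i) (ders i Y))) [0..<E]))"
    unfolding pact_upto_def by (rule ceq_tsum_cong) (simp add: ceq.sml_distl)
  also have "ceq N \<dots> (Add (pact_upto E p Y) (pact_upto E q Y))"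
    unfolding pact_upto_def by (rule ceq_tsum_add)
  finally show ?thesis .
qed

lemma pact_upto_0: "ceq N (pact_upto E 0 Y) Zer"
  unfolding pact_upto_def by (rule ceq_tsum_Zer) (auto simp: ceq.sml_zero)

lemma pact_upto_monom:
  assumes "i < E"
  shows "ceq N (pact_upto E (monom c i) Y) (Sml c (ders i Y))"
proof -
  have "ceq N (pact_upto E (monom c i) Y) ((\<lambda>j. Sml (coeff (monom c i) j) (ders j Y)) i)"
    unfolding pact_upto_def
    by (rule ceq_tsum_single) (use assms in \<open>auto simp: ceq.sml_zero\<close>)
  then show ?thesis by simp
qed

lemma normal_term_add:
  "ceq N (normal_term A E (U + V)) (Add (normal_term A E U) (normal_term A E V))"
proof -
  have "ceq N (normal_term A E (U + V)) (tsum (map (\<lambda>a. Add (pact_upto E (coeff U (Suc a)) (L0v a))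
      (pact_upto E (coeff V (Suc a)) (L0v a))) [0..<A]))"
    unfolding normal_term_def by (rule ceq_tsum_cong) (simp add: pact_upto_add)
  also have "ceq N \<dots> (Add (normal_term A E U) (normal_term A E V))"
    unfolding normal_term_def by (rule ceq_tsum_add)
  finally show ?thesis .
qed

lemma normal_term_0: "ceq N (normal_term A E 0) Zer"
  unfolding normal_term_def by (rule ceq_tsum_Zer) (auto simp: pact_upto_0)

lemma normal_term_monom:
  assumes "a < A" "i < E"
  shows "ceq N (normal_term A E (monom (monom c i) (Suc a))) (Sml c (ders i (L0v a)))"
proof -
  have "ceq N (normal_term A E (monom (monom c i) (Suc a)))
      ((\<lambda>b. pact_upto E (coeff (monom (monom c i) (Suc a)) (Suc b)) (L0v b)) a)"
    unfolding normal_term_def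
    by (rule ceq_tsum_single) (use assms(1) in \<open>auto simp: pact_upto_0\<close>)
  also have "ceq N \<dots> (Sml c (ders i (L0v a)))" using assms(2) by (simp add: pact_upto_monom)
  finally show ?thesis .
qed

lemma ceq_l0v_comb_normal_term:
  "(\<And>c i a. (c, i, a) \<in> set L \<Longrightarrow> a < A \<and> i < E) \<Longrightarrow>
    ceq 2 (l0v_comb L) (normal_term A E (interp (l0v_comb L)))"
proof (induct L)
  case Nil show ?case by (simp add: l0v_comb_def) (rule ceq.sym, rule normal_term_0)
next
  case (Cons x L)
  obtain c i a where x: "x = (c, i, a)" by (cases x) auto
  have ai: "a < A" "i < E" using Cons(2)[of c i a] x by auto
  have IH: "ceq 2 (l0v_comb L) (normal_term A E (interp (l0v_comb L)))" using Cons by auto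
  have e: "l0v_comb (x # L) = Add (Sml c (ders i (L0v a))) (l0v_comb L)"
    by (simp add: l0v_comb_def x)
  have "ceq 2 (l0v_comb (x # L))
      (Add (normal_term A E (monom (monom c i) (Suc a))) (normal_term A E (interp (l0v_comb L))))"
    unfolding e by (rule ceq.cAdd, rule ceq.sym, rule normal_term_monom[OF ai], rule IH)
  also have "ceq 2 \<dots> (normal_term A E (interp (l0v_comb (x # L))))"
  proof -
    have "interp (l0v_comb (x # L)) = monom (monom c i) (Suc a) + interp (l0v_comb L)"
      by (simp only: e interp.simps(3) interp_item)
    then show ?thesis by simp (rule ceq.sym, rule normal_term_add)
  qed
  finally show ?case .
qed

lemma ceq_normal_term:
  "\<exists>A0 E0. \<forall>A E. A0 \<le> A \<longrightarrow> E0 \<le> E \<longrightarrow> ceq 2 t (normal_term A E (interp (t :: 'k::field_char_0 ct)))"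
proof -
  obtain L where L: "ceq 2 t (l0v_comb L)"
    using l0v_spanned_all[of t] l0v_spanned_def by blast
  have evt: "interp t = interp (l0v_comb L)" using interp_sound[OF L] .
  define A0 where "A0 = Suc (sum_list (map (\<lambda>(c, i, a). a) L))"
  define E0 where "E0 = Suc (sum_list (map (\<lambda>(c, i, a). i) L))"
  show ?thesis
  proof (intro exI allI impI)
    fix A E assume A: "A0 \<le> A" and E: "E0 \<le> E"
    have "(c, i, a) \<in> set L \<Longrightarrow> a < A \<and> i < E" for c i a
    proof -
      assume m: "(c, i, a) \<in> set L"
      have "a \<le> sum_list (map (\<lambda>(c, i, a). a) L)" "i \<le> sum_list (map (\<lambda>(c, i, a). i) L)"
        using m by (force intro: member_le_sum_list)+
      then show ?thesis using A E A0_def E0_def by simp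
    qed
    then have "ceq 2 (l0v_comb L) (normal_term A E (interp (l0v_comb L)))"
      by (rule ceq_l0v_comb_normal_term)
    then show "ceq 2 t (normal_term A E (interp t))" using L evt by (metis ceq.trans)
  qed
qed

lemma ceq_iff_interp_eq: "ceq 2 s t \<longleftrightarrow> interp s = interp (t :: 'k::field_char_0 ct)"
proof
  assume e: "interp s = interp t"
  obtain A1 E1 where 1: "\<forall>A E. A1 \<le> A \<longrightarrow> E1 \<le> E \<longrightarrow> ceq 2 s (normal_term A E (interp s))"
    using ceq_normal_term by blast
  obtain A2 E2 where 2: "\<forall>A E. A2 \<le> A \<longrightarrow> E2 \<le> E \<longrightarrow> ceq 2 t (normal_term A E (interp t))"
    using ceq_normal_term by blast
  have "ceq 2 s (normal_term (max A1 A2) (max E1 E2) (interp s))" using 1 by simp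
  moreover have "ceq 2 t (normal_term (max A1 A2) (max E1 E2) (interp s))" using 2 e by simp
  ultimately show "ceq 2 s t" by (meson ceq.sym ceq.trans)
qed (rule interp_sound)

lemma inF_ceq: "ceq N s t \<Longrightarrow> inF N n t \<Longrightarrow> inF N n s"
  unfolding inF_def by (meson ceq.trans)

lemma degree_interp_le_if_inF:
  assumes "inF 2 n t"
  shows "degree (interp (t :: 'k::field_char_0 ct)) \<le> n"
proof -
  obtain L :: "('k \<times> nat \<times> nat list) list" where L: "\<forall>(c, i, ns) \<in> set L. length ns < n"
    and t: "ceq 2 t (tsum (map (\<lambda>(c, i, ns). Sml c (ders i (mono ns))) L))"
    using assms unfolding inF_def by blast
  have "interp t = sum_list (map (interp \<circ> (\<lambda>(c, i, ns). Sml c (ders i (mono ns)))) L)"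
    using interp_sound[OF t] by (simp add: interp_tsum)
  also have "degree \<dots> \<le> n"
  proof (rule degree_sum_list_le)
    fix x assume "x \<in> set (map (interp \<circ> (\<lambda>(c, i, ns). Sml c (ders i (mono ns)))) L)"
    then obtain c i ns where m: "(c, i, ns) \<in> set L" and x: "x = interp (Sml c (ders i (mono ns)))"
      by auto
    have "degree x \<le> degree (interp (mono ns) :: 'k pv)"
      unfolding x by (simp add: interp_ders)
    also have "\<dots> \<le> Suc (length ns)" by (rule degree_interp_mono)
    also have "\<dots> \<le> n" using L m by auto
    finally show "degree x \<le> n" .
  qed
  finally show ?thesis .
qed

lemma ceq_normal_term_truncate:
  assumes "degree U \<le> n" "n \<le> A"
  shows "ceq N (normal_term A E U) (normal_term n E U)"
proof -
  let ?f = "\<lambda>a. pact_upto E (coeff U (Suc a)) (L0v a)"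
  have "[0..<A] = [0..<n] @ [n..<A]"
    using assms(2) upt_add_eq_append[of 0 n "A - n"] by simp
  then have "ceq N (normal_term A E U) (Add (normal_term n E U) (tsum (map ?f [n..<A])))"
    unfolding normal_term_def by (simp add: ceq_tsum_append)
  also have "ceq N \<dots> (Add (normal_term n E U) Zer)"
    using assms(1) by (intro ceq.cAdd ceq.refl ceq_tsum_Zer) (auto simp: coeff_eq_0 pact_upto_0)
  also have "ceq N \<dots> (normal_term n E U)" by (rule ceq_add_zero_right)
  finally show ?thesis .
qed

lemma inF_normal_term:
  fixes U :: "'k::field_char_0 pv"
  shows "inF N n (normal_term n E U)"
proof -
  define g where "g = (\<lambda>(c, i, ns). Sml c (ders i (mono ns)) :: 'k ct)"
  define xss where "xss = map (\<lambda>a. map (\<lambda>i. (coeff (coeff U (Suc a)) i, i, replicate a (0::nat)))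
    [0..<E]) [0..<n]"
  have "normal_term n E U = tsum (map tsum (map (map g) xss))"
    by (simp add: normal_term_def pact_upto_def L0v_def g_def xss_def o_def)
  also have "ceq N \<dots> (tsum (concat (map (map g) xss)))" by (rule ceq.sym[OF ceq_tsum_concat])
  finally have "ceq N (normal_term n E U) (tsum (map g (concat xss)))" by (simp only: map_concat)
  moreover have "\<forall>(c, i, ns) \<in> set (concat xss). length ns < n" by (auto simp: xss_def)
  ultimately show ?thesis unfolding inF_def g_def by blast
qed

lemma inF_iff_degree: "inF 2 n t \<longleftrightarrow> degree (interp (t :: 'k::field_char_0 ct)) \<le> n"
proof
  assume deg: "degree (interp t) \<le> n"
  obtain A E where AE: "\<forall>A' E'. A \<le> A' \<longrightarrow> E \<le> E' \<longrightarrow> ceq 2 t (normal_term A' E' (interp t))"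
    using ceq_normal_term by blast
  have "ceq 2 t (normal_term (max A n) E (interp t))" using AE by simp
  also have "ceq 2 \<dots> (normal_term n E (interp t))" using deg by (rule ceq_normal_term_truncate) simp
  finally show "inF 2 n t" using inF_normal_term by (rule inF_ceq)
qed (rule degree_interp_le_if_inF)

section \<open>Leading terms of products and brackets\<close>

lemma pvprod_eq: "pvprod p q = neg_lambda p * shift_lambda q"
  by (simp add: pvprod_def neg_lambda_def shift_lambda_def)

lemma pvbr_eq:
  "pvbr n m p q = (of_nat n * [:[:0, 1:]:] + of_nat (n + m) * [:0, 1:]) * pvprod p q"
proof -
  have "[:[:0, of_nat n:], [:of_nat (n + m):]:] =
      of_nat n * [:[:0, 1:]:] + of_nat (n + m) * [:0, 1::'a poly:]"
    by (simp add: of_nat_poly)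
  then show ?thesis by (simp add: pvbr_def mult.commute)
qed

lemma coeff_lprod_at_degree_bound:
  assumes "degree U \<le> n" "degree W \<le> m"
  shows "coeff (lprod U W) (n + m) = pvprod (coeff U n) (coeff W m)"
  unfolding lprod_def pvprod_eq coeff_mult_at_degree_bound[OF degree_lprod_factors(1,3)[OF assms]]
    coeff_pcompose_shift_top[OF degree_lprod_factors(2)[OF assms]]
  by (simp add: coeff_map_poly)

lemma coeff_lprod_below_degree_bound:
  assumes "degree U \<le> n" "degree W \<le> m" "1 \<le> n" "1 \<le> m"
  shows "coeff (lprod U W) (n + m - 1) =
    neg_lambda (coeff U n) *
      (shift_lambda (coeff W (m - 1)) + of_nat m * [:0, 1:] * shift_lambda (coeff W m))
    + neg_lambda (coeff U (n - 1)) * shift_lambda (coeff W m)"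
  unfolding lprod_def
    coeff_mult_below_degree_bound[OF degree_lprod_factors(1,3)[OF assms(1,2)] assms(3,4)]
    coeff_pcompose_shift_top[OF degree_lprod_factors(2)[OF assms(1,2)]]
    coeff_pcompose_shift_below_top[OF degree_lprod_factors(2)[OF assms(1,2)] assms(4)]
  by (simp add: coeff_map_poly)

text \<open>The substitution \<lambda> \<mapsto> -\<partial> - \<lambda>, turning (w _\<lambda> u) into (w _{-\<partial>-\<lambda>} u).\<close>
definition flip_lambda :: "'k::field_char_0 poly poly \<Rightarrow> 'k poly poly" where
  "flip_lambda c = pcompose c [:[:0, -1:], -1:]"

lemma flip_lambda_0 [simp]: "flip_lambda 0 = 0"
  by (simp add: flip_lambda_def)

lemma flip_lambda_add: "flip_lambda (a + b) = flip_lambda a + flip_lambda b"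
  and flip_lambda_mult: "flip_lambda (a * b) = flip_lambda a * flip_lambda b"
  and flip_lambda_of_nat: "flip_lambda (of_nat n) = of_nat n"
  and flip_lambda_lambda: "flip_lambda [:0, 1:] = - [:[:0, 1:]:] - [:0, 1:]"
  by (simp_all add: flip_lambda_def pcompose_add pcompose_mult of_nat_poly pcompose_pCons)

lemma flip_lambda_neg_lambda: "flip_lambda (neg_lambda a) = shift_lambda a"
  and flip_lambda_shift_lambda: "flip_lambda (shift_lambda a) = neg_lambda a"
  by (simp_all add: flip_lambda_def neg_lambda_def shift_lambda_def pcompose_psub pcompose_pCons)

definition lbracket :: "'k::field_char_0 pv \<Rightarrow> 'k pv \<Rightarrow> 'k poly poly poly" where
  "lbracket U W = lprod U W - map_poly flip_lambda (lprod W U)"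

lemma coeff_lbracket:
  "coeff (lbracket U W) a = coeff (lprod U W) a - flip_lambda (coeff (lprod W U) a)"
  by (simp add: lbracket_def coeff_map_poly)

lemma degree_lbracket: "degree (lbracket U W) \<le> degree U + degree W"
proof -
  have "degree (lbracket U W) \<le>
      max (degree (lprod U W)) (degree (map_poly flip_lambda (lprod W U)))"
    unfolding lbracket_def by (rule degree_diff_le_max)
  moreover have "degree (map_poly flip_lambda (lprod W U)) \<le> degree U + degree W"
    using map_poly_degree_leq[of flip_lambda "lprod W U"] degree_lprod[of W U] by linarith
  ultimately show ?thesis using degree_lprod[of U W] by linarith
qed

lemma coeff_lbracket_at_degree_bound:
  assumes "degree U \<le> n" "degree W \<le> m"
  shows "coeff (lbracket U W) (n + m) = 0"
  using coeff_lprod_at_degree_bound[OF assms] coeff_lprod_at_degree_bound[OF assms(2,1)]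
  by (simp add: coeff_lbracket pvprod_eq add.commute flip_lambda_mult flip_lambda_neg_lambda
      flip_lambda_shift_lambda mult.commute)

lemma coeff_lbracket_below_degree_bound:
  assumes "degree U \<le> n" "degree W \<le> m" "1 \<le> n" "1 \<le> m"
  shows "coeff (lbracket U W) (n + m - 1) = pvbr n m (coeff U n) (coeff W m)"
proof -
  have "coeff (lprod W U) (n + m - 1) =
    neg_lambda (coeff W m) *
      (shift_lambda (coeff U (n - 1)) + of_nat n * [:0, 1:] * shift_lambda (coeff U n))
    + neg_lambda (coeff W (m - 1)) * shift_lambda (coeff U n)"
    using coeff_lprod_below_degree_bound[OF assms(2,1,4,3)] by (simp add: add.commute)
  then have "flip_lambda (coeff (lprod W U) (n + m - 1)) =
    shift_lambda (coeff W m) *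
      (neg_lambda (coeff U (n - 1))
        + of_nat n * (- [:[:0, 1:]:] - [:0, 1:]) * neg_lambda (coeff U n))
    + shift_lambda (coeff W (m - 1)) * neg_lambda (coeff U n)"
    by (simp only: flip_lambda_add flip_lambda_mult flip_lambda_neg_lambda flip_lambda_shift_lambda
        flip_lambda_of_nat flip_lambda_lambda)
  then show ?thesis
    unfolding coeff_lbracket coeff_lprod_below_degree_bound[OF assms] pvbr_eq pvprod_eq of_nat_add
    by algebra
qed

lemma fact_smult_coeff_flip_power:
  assumes "k \<le> j"
  shows "smult (fact k) (coeff ([:[:0, -1:], -1:] ^ j) k)
       = smult ((-1) ^ j / fact (j - k) * fact j) ([:0, 1::'k::field_char_0:] ^ (j - k))"
proof -
  have sign: "(-1::'k) ^ k * (-1) ^ (j - k) = (-1) ^ j"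
    using assms by (simp flip: power_add)
  have "fact k * of_nat (j choose k) = (fact j / fact (j - k) :: 'k)"
    using assms by (simp add: binomial_fact field_simps)
  with sign have scalar: "fact k * (of_nat (j choose k) * ((-1) ^ k * (-1) ^ (j - k)))
      = ((-1) ^ j / fact (j - k) * fact j :: 'k)"
    by (simp add: field_simps)
  have "(-1::'k poly) = [:-1:]" by (simp add: one_pCons)
  then have sign_poly: "(-1::'k poly) ^ k = [:(-1) ^ k:]" by (simp only: poly_const_pow)
  have neg_power: "[:0, -1::'k:] ^ (j - k) = smult ((-1) ^ (j - k)) ([:0, 1:] ^ (j - k))"
    by (simp flip: smult_power)
  have "smult (fact k) (coeff ([:[:0, -1:], -1:] ^ j) k)
      = smult (fact k * (of_nat (j choose k) * ((-1) ^ k * (-1) ^ (j - k))))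
          ([:0, 1::'k:] ^ (j - k))"
    unfolding coeff_linear_poly_power[OF assms]
    by (simp only: sign_poly neg_power) (simp add: of_nat_poly mult_ac)
  then show ?thesis by (simp only: scalar)
qed

text \<open>Taylor expansion of c(\<partial>, -\<partial> - \<lambda>) in \<lambda>; its coefficients are those in the definition of brk.\<close>
lemma fact_smult_coeff_flip_lambda:
  fixes c :: "'k::field_char_0 poly poly"
  assumes vanish: "\<forall>j\<ge>B. coeff c j = 0"
  shows "smult (fact k) (coeff (flip_lambda c) k) =
    (\<Sum>j\<in>{k..<B}. smult ((-1) ^ j / fact (j - k) * fact j) ([:0, 1:] ^ (j - k) * coeff c j))"
proof -
  have "degree c \<le> B + k" using degree_le_if_coeff_eventually_0[OF vanish] by simp
  then have "smult (fact k) (coeff (flip_lambda c) k) =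
      (\<Sum>j\<le>B + k. coeff c j * smult (fact k) (coeff ([:[:0, -1:], -1:] ^ j) k))"
    unfolding flip_lambda_def by (simp add: coeff_pcompose_eq_sum smult_sum_right)
  also have "\<dots> =
      (\<Sum>j\<in>{k..<B}. smult ((-1) ^ j / fact (j - k) * fact j) ([:0, 1:] ^ (j - k) * coeff c j))"
  proof (rule sum.mono_neutral_cong_right)
    show "\<forall>j\<in>{..B + k} - {k..<B}. coeff c j * smult (fact k) (coeff ([:[:0, -1:], -1:] ^ j) k) = 0"
      using vanish by (auto simp: coeff_linear_poly_power_if)
  qed (auto simp: fact_smult_coeff_flip_power mult_ac)
  finally show ?thesis .
qed

lemma fact_smult_lambda_coeff_flip_lambda:
  fixes P :: "'k::field_char_0 poly poly poly"
  assumes vanish: "\<forall>j\<ge>B. lambda_coeff j P = 0"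
  shows "smult [:fact k:] (lambda_coeff k (map_poly flip_lambda P)) =
    (\<Sum>j\<in>{k..<B}. smult [:(-1) ^ j / fact (j - k):]
                     (smult ([:0, 1:] ^ (j - k)) (smult [:fact j:] (lambda_coeff j P))))"
proof (rule poly_eqI)
  fix a
  have "\<forall>j\<ge>B. coeff (coeff P a) j = 0"
    using vanish by (metis coeff_lambda_coeff coeff_0)
  then show "coeff (smult [:fact k:] (lambda_coeff k (map_poly flip_lambda P))) a =
    coeff (\<Sum>j\<in>{k..<B}. smult [:(-1) ^ j / fact (j - k):]
                     (smult ([:0, 1:] ^ (j - k)) (smult [:fact j:] (lambda_coeff j P)))) a"
    by (simp add: coeff_sum coeff_lambda_coeff coeff_map_poly fact_smult_coeff_flip_lambda mult_ac)
qed

lemma interp_brk: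
  assumes vanish: "\<forall>j\<ge>B. ceq 2 (Prd j w u) (Zer :: 'k::field_char_0 ct)"
  shows "interp (brk k B u w) = smult [:fact k:] (lambda_coeff k (lbracket (interp u) (interp w)))"
proof -
  have "\<forall>j\<ge>B. lambda_coeff j (lprod (interp w) (interp u)) = 0"
    using vanish by (simp add: ceq_iff_interp_eq nprod_def)
  then have "interp (brk k B u w) = nprod k (interp u) (interp w)
      - smult [:fact k:] (lambda_coeff k (map_poly flip_lambda (lprod (interp w) (interp u))))"
    by (simp add: fact_smult_lambda_coeff_flip_lambda brk_def interp_Sub interp_tsum interp_ders
        interv_sum_list_conv_sum_set_nat o_def nprod_def del: upt_Suc)
  then show ?thesis
    by (simp add: nprod_def lbracket_def lambda_coeff_diff smult_diff_right)
qed

section \<open>The associated graded algebra\<close>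

lemma inF_L0v: "1 \<le> n \<Longrightarrow> inF 2 n (L0v (n - 1) :: 'k::field_char_0 ct)"
  using degree_monom_le[of "1::'k poly" n] by (simp add: inF_iff_degree interp_L0v)

lemma inF_Sub_pact_L0v_iff:
  assumes "1 \<le> n"
  shows "inF 2 (n - 1) (Sub x (pact p (L0v (n - 1)))) \<longleftrightarrow>
    degree (interp x) \<le> n \<and> coeff (interp x) n = p"
proof -
  have "interp (Sub x (pact p (L0v (n - 1)))) = interp x - monom p n"
    using assms by (simp add: interp_Sub interp_pact interp_L0v smult_monom)
  then show ?thesis by (simp only: inF_iff_degree degree_diff_monom_le_pred_iff[OF assms])
qed

lemma leading_coefficient_unique:
  assumes "1 \<le> n" "inF 2 n x"
  shows "\<exists>!p. inF 2 (n - 1) (Sub x (pact p (L0v (n - 1))))"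
  unfolding inF_Sub_pact_L0v_iff[OF assms(1)] using assms(2) by (simp add: inF_iff_degree)

lemma Prd_eventually_Zer: "\<exists>B. \<forall>j\<ge>B. ceq 2 (Prd j w u) (Zer :: 'k::field_char_0 ct)"
  using lambda_coeff_eventually_0[of "lprod (interp w) (interp u)"]
  by (auto simp: ceq_iff_interp_eq nprod_def)

lemma Prd_leading_term:
  assumes "1 \<le> n" "1 \<le> m"
    and "inF 2 (n - 1) (Sub u (pact p (L0v (n - 1))))"
    and "inF 2 (m - 1) (Sub w (pact q (L0v (m - 1))))"
  shows "inF 2 (n + m) (Prd j u w) \<and>
    inF 2 (n + m - 1)
      (Sub (Prd j u w) (pact (smult (fact j) (coeff (pvprod p q) j)) (L0v (n + m - 1))))"
proof -
  from assms have U: "degree (interp u) \<le> n" "coeff (interp u) n = p"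
    and W: "degree (interp w) \<le> m" "coeff (interp w) m = q"
    by (simp_all only: inF_Sub_pact_L0v_iff)
  have "degree (interp (Prd j u w)) \<le> n + m"
    using degree_nprod[of j "interp u" "interp w"] U W by simp
  moreover have "coeff (interp (Prd j u w)) (n + m) = smult (fact j) (coeff (pvprod p q) j)"
    using coeff_lprod_at_degree_bound[OF U(1) W(1)] U W by (simp add: nprod_def coeff_lambda_coeff)
  moreover have nm: "1 \<le> n + m" using assms(1) by simp
  ultimately show ?thesis
    unfolding inF_Sub_pact_L0v_iff[OF nm] by (simp add: inF_iff_degree)
qed

lemma brk_leading_term:
  assumes "1 \<le> n" "1 \<le> m"
    and "inF 2 (n - 1) (Sub u (pact p (L0v (n - 1))))"
    and "inF 2 (m - 1) (Sub w (pact q (L0v (m - 1))))"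
    and "\<forall>j\<ge>B. ceq 2 (Prd j w u) Zer"
  shows "inF 2 (n + m - 1) (brk k B u w) \<and>
    inF 2 (n + m - 2)
      (Sub (brk k B u w) (pact (smult (fact k) (coeff (pvbr n m p q) k)) (L0v (n + m - 2))))"
proof -
  from assms have U: "degree (interp u) \<le> n" "coeff (interp u) n = p"
    and W: "degree (interp w) \<le> m" "coeff (interp w) m = q"
    by (simp_all only: inF_Sub_pact_L0v_iff)
  have coeff_brk: "coeff (interp (brk k B u w)) a =
      smult (fact k) (coeff (coeff (lbracket (interp u) (interp w)) a) k)" for a
    using assms(5) by (simp add: interp_brk coeff_lambda_coeff)
  have "degree (interp (brk k B u w)) \<le> n + m"
    using degree_lbracket[of "interp u" "interp w"] U W
      degree_lambda_coeff_le[of k "lbracket (interp u) (interp w)"]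
    by (simp add: interp_brk assms(5))
  then have "degree (interp (brk k B u w)) \<le> n + m - 1"
    by (rule degree_le_pred_if_coeff_eq_0)
      (simp add: coeff_brk coeff_lbracket_at_degree_bound U W)
  moreover have "coeff (interp (brk k B u w)) (n + m - 1) =
      smult (fact k) (coeff (pvbr n m p q) k)"
    unfolding coeff_brk coeff_lbracket_below_degree_bound[OF U(1) W(1) assms(1,2)] U W ..
  moreover have nm: "1 \<le> n + m - 1" using assms(1,2) by simp
  moreover have pred_pred: "n + m - 2 = n + m - 1 - 1" by simp
  ultimately show ?thesis
    unfolding pred_pred inF_Sub_pact_L0v_iff[OF nm] by (simp add: inF_iff_degree)
qed

theorem mainTheorem13:
  shows "(\<forall>n \<ge> 1. inF 2 n (L0v (n - 1) :: 'k::field_char_0 ct) \<and>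
           (\<forall>x :: 'k ct. inF 2 n x \<longrightarrow> (\<exists>!p. inF 2 (n - 1) (Sub x (pact p (L0v (n - 1)))))))
   \<and> (\<forall>n m (u :: 'k ct) w p q. 1 \<le> n \<longrightarrow> 1 \<le> m \<longrightarrow> inF 2 n u \<longrightarrow> inF 2 m w \<longrightarrow>
        inF 2 (n - 1) (Sub u (pact p (L0v (n - 1)))) \<longrightarrow>
        inF 2 (m - 1) (Sub w (pact q (L0v (m - 1)))) \<longrightarrow>
        (\<forall>j. inF 2 (n + m) (Prd j u w) \<and>
             inF 2 (n + m - 1) (Sub (Prd j u w)
                 (pact (smult (fact j) (coeff (pvprod p q) j)) (L0v (n + m - 1)))))
      \<and> (\<exists>B. \<forall>j \<ge> B. ceq 2 (Prd j w u) Zer)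
      \<and> (\<forall>B. (\<forall>j \<ge> B. ceq 2 (Prd j w u) Zer) \<longrightarrow>
          (\<forall>k. inF 2 (n + m - 1) (brk k B u w) \<and>
               inF 2 (n + m - 2) (Sub (brk k B u w)
                 (pact (smult (fact k) (coeff (pvbr n m p q) k)) (L0v (n + m - 2)))))))"
  by (intro conjI allI impI)
    (assumption | rule inF_L0v leading_coefficient_unique Prd_eventually_Zer
      Prd_leading_term[THEN conjunct1] Prd_leading_term[THEN conjunct2]
      brk_leading_term[THEN conjunct1] brk_leading_term[THEN conjunct2])+

end
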